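(* Let $(\alpha_D)_D$ be a holomorphically contractible family of pseudometrics and $n\ge3$. There exist a domain $D\subset\mathbb{C}^n$ and subdomains $D_1\subset D_2\subset\dots\subset D$ with $\bigcup_{m\ge1}D_m=D$ such that $\widetilde{\mathbb W}\alpha_{D_m}$ does not converge (pointwise) to $\widetilde{\mathbb W}\alpha_D$ and $\mathbb W\alpha_{D_m}$ does not converge (pointwise) to $\mathbb W\alpha_D$ as $m\to\infty$.
   Context: $\Delta$ is the open unit disc in $\mathbb{C}$. A pseudometric on a domain $D\subset\mathbb{C}^n$ is a function $\eta:D\times\mathbb{C}^n\to[0,\infty)$ with $\eta(a;\lambda X)=|\lambda|\eta(a;X)$. A holomorphically contractible family of pseudometrics is an assignment of a pseudometric $\alpha_D$ to every domain $D\subset\mathbb{C}^n$, for all $n\ge1$, such that $\alpha_\Delta(z;X)=|X|/(1-|z|^2)$ and $\alpha_{D_2}(F(z);F'(z)X)\le\alpha_{D_1}(z;X)$ for all domains $D_1\subset\mathbb{C}^{n_1}$, $D_2\subset\mathbb{C}^{n_2}$, holomorphic $F:D_1\to D_2$, $z\in D_1$, $X\in\mathbb{C}^{n_1}$. (Such $\alpha_D$ lie in $\mathcal M(D)$.) $\mathcal M(D)$: pseudometrics $\eta$ on $D$ such that for every $a\in D$ there are $M,r>0$ with $\eta(z;X)\le M\|X\|$ for $z$ in the ball $\mathbb{B}(a,r)\subset D$, $X\in\mathbb{C}^n$. Wu pseudometric: for $\eta\in\mathcal M(D)$ and $a\in D$, let $\widehat\eta(a;X)=\sup p(X)$ over all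 $\mathbb{C}$-seminorms $p\le\eta(a;\cdot)$. Let $V_\eta(a)=\{X:\widehat\eta(a;X)=0\}$, $U_\eta(a)$ its orthogonal complement (standard Hermitian product), $m(\eta,a)=\dim U_\eta(a)$. Let $\mathcal F(\eta,a)$ be the set of positive semidefinite Hermitian forms $s$ on $\mathbb{C}^n$ with $\sqrt{s(X,X)}\le\eta(a;X)$ for all $X$, ordered by $\alpha\prec\beta$ iff $\det[\alpha(e_j,e_k)]\le\det[\beta(e_j,e_k)]$ for a basis $(e_j)$ of $U_\eta(a)$; it has a unique maximal element $s(\eta,a)$. Set $\widetilde{\mathbb W}\eta(a;X)=\sqrt{s(\eta,a)(X,X)}$ and $\mathbb W\eta(a;X)=\sqrt{m(\eta,a)}\,\widetilde{\mathbb W}\eta(a;X)$. *)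

theory Defs
  imports "HOL-Analysis.Analysis"
begin

text \<open>C^n is modelled, uniformly in n, as the set of functions nat => complex
  vanishing outside {0..<n}; all notions are spelled out with explicit dimension n.\<close>

definition cvec :: "nat \<Rightarrow> (nat \<Rightarrow> complex) set" where
  "cvec n = {z. \<forall>i\<ge>n. z i = 0}"

definition vadd :: "(nat \<Rightarrow> complex) \<Rightarrow> (nat \<Rightarrow> complex) \<Rightarrow> (nat \<Rightarrow> complex)" where
  "vadd X Y = (\<lambda>i. X i + Y i)"

definition vsub :: "(nat \<Rightarrow> complex) \<Rightarrow> (nat \<Rightarrow> complex) \<Rightarrow> (nat \<Rightarrow> complex)" where
  "vsub X Y = (\<lambda>i. X i - Y i)"

definition vscale :: "complex \<Rightarrow> (nat \<Rightarrow> complex) \<Rightarrow> (nat \<Rightarrow> complex)" where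
  "vscale c X = (\<lambda>i. c * X i)"

definition cinner :: "nat \<Rightarrow> (nat \<Rightarrow> complex) \<Rightarrow> (nat \<Rightarrow> complex) \<Rightarrow> complex" where
  "cinner n X Y = (\<Sum>i<n. X i * cnj (Y i))"

definition cnorm :: "nat \<Rightarrow> (nat \<Rightarrow> complex) \<Rightarrow> real" where
  "cnorm n X = sqrt (\<Sum>i<n. (cmod (X i))\<^sup>2)"

definition copen :: "nat \<Rightarrow> (nat \<Rightarrow> complex) set \<Rightarrow> bool" where
  "copen n D \<longleftrightarrow> D \<subseteq> cvec n \<and>
     (\<forall>a\<in>D. \<exists>r>0. \<forall>z\<in>cvec n. cnorm n (vsub z a) < r \<longrightarrow> z \<in> D)"

definition cconnected :: "nat \<Rightarrow> (nat \<Rightarrow> complex) set \<Rightarrow> bool" where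
  "cconnected n D \<longleftrightarrow> \<not> (\<exists>U V. copen n U \<and> copen n V \<and> D \<subseteq> U \<union> V \<and>
       U \<inter> V \<inter> D = {} \<and> U \<inter> D \<noteq> {} \<and> V \<inter> D \<noteq> {})"

definition cdomain :: "nat \<Rightarrow> (nat \<Rightarrow> complex) set \<Rightarrow> bool" where
  "cdomain n D \<longleftrightarrow> D \<noteq> {} \<and> copen n D \<and> cconnected n D"

definition unit_disc :: "(nat \<Rightarrow> complex) set" where
  "unit_disc = {z \<in> cvec 1. cmod (z 0) < 1}"

definition clinear :: "nat \<Rightarrow> nat \<Rightarrow> ((nat \<Rightarrow> complex) \<Rightarrow> (nat \<Rightarrow> complex)) \<Rightarrow> bool" where
  "clinear n1 n2 L \<longleftrightarrow> (\<forall>X\<in>cvec n1. L X \<in> cvec n2) \<and>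
     (\<forall>X\<in>cvec n1. \<forall>Y\<in>cvec n1. L (vadd X Y) = vadd (L X) (L Y)) \<and>
     (\<forall>c. \<forall>X\<in>cvec n1. L (vscale c X) = vscale c (L X))"

definition chas_deriv :: "nat \<Rightarrow> nat \<Rightarrow> ((nat \<Rightarrow> complex) \<Rightarrow> (nat \<Rightarrow> complex)) \<Rightarrow>
    ((nat \<Rightarrow> complex) \<Rightarrow> (nat \<Rightarrow> complex)) \<Rightarrow> (nat \<Rightarrow> complex) \<Rightarrow> bool" where
  "chas_deriv n1 n2 F L z \<longleftrightarrow> clinear n1 n2 L \<and>
     (\<forall>\<epsilon>>0. \<exists>\<delta>>0. \<forall>h\<in>cvec n1. cnorm n1 h < \<delta> \<longrightarrow>
        cnorm n2 (vsub (vsub (F (vadd z h)) (F z)) (L h)) \<le> \<epsilon> * cnorm n1 h)"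

definition cholo :: "nat \<Rightarrow> nat \<Rightarrow> ((nat \<Rightarrow> complex) \<Rightarrow> (nat \<Rightarrow> complex)) \<Rightarrow>
    (nat \<Rightarrow> complex) set \<Rightarrow> (nat \<Rightarrow> complex) set \<Rightarrow> bool" where
  "cholo n1 n2 F D1 D2 \<longleftrightarrow> (\<forall>z\<in>D1. F z \<in> D2 \<and> (\<exists>L. chas_deriv n1 n2 F L z))"

definition pseudometric :: "nat \<Rightarrow> (nat \<Rightarrow> complex) set \<Rightarrow>
    ((nat \<Rightarrow> complex) \<Rightarrow> (nat \<Rightarrow> complex) \<Rightarrow> real) \<Rightarrow> bool" where
  "pseudometric n D \<eta> \<longleftrightarrow> (\<forall>a\<in>D. \<forall>X\<in>cvec n. \<eta> a X \<ge> 0 \<and>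
     (\<forall>c. \<eta> a (vscale c X) = cmod c * \<eta> a X))"

text \<open>A family: alpha n D is the pseudometric assigned to the domain D of C^n.\<close>
definition hol_contractible :: "(nat \<Rightarrow> (nat \<Rightarrow> complex) set \<Rightarrow>
    (nat \<Rightarrow> complex) \<Rightarrow> (nat \<Rightarrow> complex) \<Rightarrow> real) \<Rightarrow> bool" where
  "hol_contractible \<alpha> \<longleftrightarrow>
     (\<forall>n D. n \<ge> 1 \<longrightarrow> cdomain n D \<longrightarrow> pseudometric n D (\<alpha> n D)) \<and>
     (\<forall>z\<in>unit_disc. \<forall>X\<in>cvec 1. \<alpha> 1 unit_disc z X = cmod (X 0) / (1 - (cmod (z 0))\<^sup>2)) \<and>
     (\<forall>n1 n2 D1 D2 F L z X. n1 \<ge> 1 \<longrightarrow> n2 \<ge> 1 \<longrightarrow> cdomain n1 D1 \<longrightarrow> cdomain n2 D2 \<longrightarrow>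
        cholo n1 n2 F D1 D2 \<longrightarrow> z \<in> D1 \<longrightarrow> X \<in> cvec n1 \<longrightarrow> chas_deriv n1 n2 F L z \<longrightarrow>
        \<alpha> n2 D2 (F z) (L X) \<le> \<alpha> n1 D1 z X)"

definition cseminorm :: "nat \<Rightarrow> ((nat \<Rightarrow> complex) \<Rightarrow> real) \<Rightarrow> bool" where
  "cseminorm n p \<longleftrightarrow> (\<forall>X\<in>cvec n. p X \<ge> 0) \<and>
     (\<forall>X\<in>cvec n. \<forall>Y\<in>cvec n. p (vadd X Y) \<le> p X + p Y) \<and>
     (\<forall>c. \<forall>X\<in>cvec n. p (vscale c X) = cmod c * p X)"

definition hat_metric :: "nat \<Rightarrow> ((nat \<Rightarrow> complex) \<Rightarrow> (nat \<Rightarrow> complex) \<Rightarrow> real) \<Rightarrow>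
    (nat \<Rightarrow> complex) \<Rightarrow> (nat \<Rightarrow> complex) \<Rightarrow> real" where
  "hat_metric n \<eta> a X = Sup {p X | p. cseminorm n p \<and> (\<forall>Y\<in>cvec n. p Y \<le> \<eta> a Y)}"

definition V_set :: "nat \<Rightarrow> ((nat \<Rightarrow> complex) \<Rightarrow> (nat \<Rightarrow> complex) \<Rightarrow> real) \<Rightarrow>
    (nat \<Rightarrow> complex) \<Rightarrow> (nat \<Rightarrow> complex) set" where
  "V_set n \<eta> a = {X \<in> cvec n. hat_metric n \<eta> a X = 0}"

definition U_set :: "nat \<Rightarrow> ((nat \<Rightarrow> complex) \<Rightarrow> (nat \<Rightarrow> complex) \<Rightarrow> real) \<Rightarrow>
    (nat \<Rightarrow> complex) \<Rightarrow> (nat \<Rightarrow> complex) set" where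
  "U_set n \<eta> a = {Y \<in> cvec n. \<forall>X\<in>V_set n \<eta> a. cinner n X Y = 0}"

definition is_basis :: "nat \<Rightarrow> (nat \<Rightarrow> complex) set \<Rightarrow> nat \<Rightarrow> (nat \<Rightarrow> nat \<Rightarrow> complex) \<Rightarrow> bool" where
  "is_basis n S k e \<longleftrightarrow> (\<forall>j<k. e j \<in> S) \<and>
     (\<forall>c. (\<forall>i. (\<Sum>j<k. c j * e j i) = 0) \<longrightarrow> (\<forall>j<k. c j = 0)) \<and>
     (\<forall>Y\<in>S. \<exists>c. Y = (\<lambda>i. \<Sum>j<k. c j * e j i))"

definition cdim :: "nat \<Rightarrow> (nat \<Rightarrow> complex) set \<Rightarrow> nat" where
  "cdim n S = (THE k. \<exists>e. is_basis n S k e)"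

definition m_index :: "nat \<Rightarrow> ((nat \<Rightarrow> complex) \<Rightarrow> (nat \<Rightarrow> complex) \<Rightarrow> real) \<Rightarrow>
    (nat \<Rightarrow> complex) \<Rightarrow> nat" where
  "m_index n \<eta> a = cdim n (U_set n \<eta> a)"

text \<open>Hermitian forms on C^n, represented by their (n x n) matrix H, zero outside n x n:
  s(X,Y) = sum_{i,j} H i j X_i conj(Y_j)\<close>
definition hform :: "nat \<Rightarrow> (nat \<Rightarrow> nat \<Rightarrow> complex) \<Rightarrow> (nat \<Rightarrow> complex) \<Rightarrow> (nat \<Rightarrow> complex) \<Rightarrow> complex" where
  "hform n H X Y = (\<Sum>i<n. \<Sum>j<n. H i j * X i * cnj (Y j))"

definition psd_hermitian :: "nat \<Rightarrow> (nat \<Rightarrow> nat \<Rightarrow> complex) \<Rightarrow> bool" where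
  "psd_hermitian n H \<longleftrightarrow> (\<forall>i j. (i \<ge> n \<or> j \<ge> n) \<longrightarrow> H i j = 0) \<and>
     (\<forall>i j. H j i = cnj (H i j)) \<and> (\<forall>X\<in>cvec n. Re (hform n H X X) \<ge> 0)"

definition F_set :: "nat \<Rightarrow> ((nat \<Rightarrow> complex) \<Rightarrow> (nat \<Rightarrow> complex) \<Rightarrow> real) \<Rightarrow>
    (nat \<Rightarrow> complex) \<Rightarrow> (nat \<Rightarrow> nat \<Rightarrow> complex) set" where
  "F_set n \<eta> a = {H. psd_hermitian n H \<and> (\<forall>X\<in>cvec n. sqrt (Re (hform n H X X)) \<le> \<eta> a X)}"

definition cdet :: "nat \<Rightarrow> (nat \<Rightarrow> nat \<Rightarrow> complex) \<Rightarrow> complex" where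
  "cdet k A = (\<Sum>p | p permutes {..<k}. of_int (sign p) * (\<Prod>j<k. A j (p j)))"

definition gram_det :: "nat \<Rightarrow> (nat \<Rightarrow> nat \<Rightarrow> complex) \<Rightarrow> nat \<Rightarrow> (nat \<Rightarrow> nat \<Rightarrow> complex) \<Rightarrow> real" where
  "gram_det n H k e = Re (cdet k (\<lambda>j l. hform n H (e j) (e l)))"

text \<open>the order on F(eta,a): via a basis of U_eta(a) (independent of the basis)\<close>
definition form_prec :: "nat \<Rightarrow> ((nat \<Rightarrow> complex) \<Rightarrow> (nat \<Rightarrow> complex) \<Rightarrow> real) \<Rightarrow>
    (nat \<Rightarrow> complex) \<Rightarrow> (nat \<Rightarrow> nat \<Rightarrow> complex) \<Rightarrow> (nat \<Rightarrow> nat \<Rightarrow> complex) \<Rightarrow> bool" where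
  "form_prec n \<eta> a H1 H2 \<longleftrightarrow>
     (\<forall>k e. is_basis n (U_set n \<eta> a) k e \<longrightarrow> gram_det n H1 k e \<le> gram_det n H2 k e)"

definition s_max :: "nat \<Rightarrow> ((nat \<Rightarrow> complex) \<Rightarrow> (nat \<Rightarrow> complex) \<Rightarrow> real) \<Rightarrow>
    (nat \<Rightarrow> complex) \<Rightarrow> (nat \<Rightarrow> nat \<Rightarrow> complex)" where
  "s_max n \<eta> a = (THE H. H \<in> F_set n \<eta> a \<and> (\<forall>H'\<in>F_set n \<eta> a. form_prec n \<eta> a H' H))"

definition Wu_tilde :: "nat \<Rightarrow> ((nat \<Rightarrow> complex) \<Rightarrow> (nat \<Rightarrow> complex) \<Rightarrow> real) \<Rightarrow>
    (nat \<Rightarrow> complex) \<Rightarrow> (nat \<Rightarrow> complex) \<Rightarrow> real" where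
  "Wu_tilde n \<eta> a X = sqrt (Re (hform n (s_max n \<eta> a) X X))"

definition Wu :: "nat \<Rightarrow> ((nat \<Rightarrow> complex) \<Rightarrow> (nat \<Rightarrow> complex) \<Rightarrow> real) \<Rightarrow>
    (nat \<Rightarrow> complex) \<Rightarrow> (nat \<Rightarrow> complex) \<Rightarrow> real" where
  "Wu n \<eta> a X = sqrt (real (m_index n \<eta> a)) * Wu_tilde n \<eta> a X"

end

theory Submission
  imports Defs
begin

text \<open>
  Let \<open>D = {|z\<^sub>0| < 1}\<close> and exhaust it by
  \<open>G\<^sub>r = {|z\<^sub>0| < 1, |z\<^sub>1| < r, |z\<^sub>0| + |z\<^sub>1|/r < 3/2}\<close>.
  At the origin every holomorphically contractible pseudometric is squeezed between linear
  functionals into the unit disc (from below) and linear discs through the origin (from above),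
  so it equals the Minkowski functional of the domain: \<open>|X\<^sub>0|\<close> for \<open>D\<close>, and for
  \<open>G\<^sub>r\<close> the norm \<open>max(|X\<^sub>0|, |X\<^sub>1|/r, 2/3 (|X\<^sub>0| + |X\<^sub>1|/r))\<close> with hexagonal
  real section.  The maximal-determinant Hermitian minorant is \<open>|X\<^sub>0|\<^sup>2\<close> (with
  \<open>m = 1\<close>) in the first case, but the inscribed ellipse \<open>4/5 (|X\<^sub>0|\<^sup>2 + |X\<^sub>1|\<^sup>2/r\<^sup>2)\<close>
  (with \<open>m = 2\<close>) in the second.  Evaluated at \<open>e\<^sub>0\<close> this gives \<open>1\<close> versus the
  constants \<open>sqrt (4/5)\<close> and \<open>sqrt (8/5)\<close>, so neither Wu metric converges.
\<close>

section \<open>Convex domains in \<open>\<complex>\<^sup>n\<close>\<close>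

lemma cnorm_nonneg: "cnorm n X \<ge> 0"
  unfolding cnorm_def by (simp add: sum_nonneg)

lemma cnorm_vscale: "cnorm n (vscale c X) = cmod c * cnorm n X"
proof -
  have "(\<Sum>j<n. (cmod (c * X j))\<^sup>2) = (cmod c)\<^sup>2 * (\<Sum>j<n. (cmod (X j))\<^sup>2)"
    by (simp add: norm_mult power_mult_distrib sum_distrib_left)
  then show ?thesis
    unfolding cnorm_def vscale_def by (simp add: real_sqrt_mult)
qed

lemma cmod_le_cnorm:
  assumes "X \<in> cvec n"
  shows "cmod (X i) \<le> cnorm n X"
proof (cases "i < n")
  case True
  then have "(cmod (X i))\<^sup>2 \<le> (\<Sum>j<n. (cmod (X j))\<^sup>2)"
    by (intro member_le_sum) auto
  then show ?thesis
    unfolding cnorm_def by (metis real_sqrt_abs real_sqrt_le_mono abs_norm_cancel)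
qed (use assms in \<open>auto simp: cvec_def cnorm_nonneg\<close>)

lemma vsub_cvec: "X \<in> cvec n \<Longrightarrow> Y \<in> cvec n \<Longrightarrow> vsub X Y \<in> cvec n"
  unfolding cvec_def vsub_def by auto

lemma chas_deriv_linear:
  assumes "clinear n1 n2 F" and "\<And>z h. F (vadd z h) = vadd (F z) (F h)"
  shows "chas_deriv n1 n2 F F z"
proof -
  have "cnorm n2 (vsub (vsub (F (vadd z h)) (F z)) (F h)) = 0" for h
    using assms(2) by (simp add: vsub_def vadd_def cnorm_def)
  then show ?thesis
    using assms(1) unfolding chas_deriv_def by (auto simp: cnorm_nonneg intro!: exI[of _ 1])
qed

definition unitvec :: "nat \<Rightarrow> nat \<Rightarrow> complex" where
  "unitvec k = (\<lambda>i. if i = k then 1 else 0)"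

lemma unitvec_cvec: "k < n \<Longrightarrow> unitvec k \<in> cvec n"
  unfolding unitvec_def cvec_def by auto

lemma zero_cvec: "(\<lambda>_. 0) \<in> cvec n"
  unfolding cvec_def by simp

lemma convex_combination_cvec:
  "p \<in> cvec n \<Longrightarrow> q \<in> cvec n \<Longrightarrow> (\<lambda>i. p i + of_real t * (q i - p i)) \<in> cvec n"
  unfolding cvec_def by auto

lemma open_segment_preimage:
  assumes W: "copen n W" and pq: "p \<in> cvec n" "q \<in> cvec n"
  shows "open {t::real. (\<lambda>i. p i + of_real t * (q i - p i)) \<in> W}"
  unfolding open_dist
proof
  define \<gamma> where "\<gamma> t = (\<lambda>i. p i + of_real t * (q i - p i))" for t :: real
  have \<gamma>_dist: "cnorm n (vsub (\<gamma> s) (\<gamma> t)) = \<bar>s - t\<bar> * cnorm n (vsub q p)" for s t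
  proof -
    have "vsub (\<gamma> s) (\<gamma> t) = vscale (of_real (s - t)) (vsub q p)"
      unfolding \<gamma>_def vsub_def vscale_def by (auto simp: algebra_simps)
    then show ?thesis by (simp add: cnorm_vscale flip: of_real_diff)
  qed
  fix t assume "t \<in> {t. \<gamma> t \<in> W}"
  then obtain r where r: "r > 0" "\<And>z. z \<in> cvec n \<Longrightarrow> cnorm n (vsub z (\<gamma> t)) < r \<Longrightarrow> z \<in> W"
    using W unfolding copen_def by blast
  define e where "e = r / (cnorm n (vsub q p) + 1)"
  have pos: "cnorm n (vsub q p) + 1 > 0"
    using cnorm_nonneg[of n "vsub q p"] by linarith
  have "\<gamma> s \<in> W" if "dist s t < e" for s
  proof (rule r(2))
    show "\<gamma> s \<in> cvec n"
      unfolding \<gamma>_def using pq by (rule convex_combination_cvec)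
    have "\<bar>s - t\<bar> * cnorm n (vsub q p) \<le> \<bar>s - t\<bar> * (cnorm n (vsub q p) + 1)"
      by (intro mult_left_mono) auto
    also have "\<dots> < r"
      using that pos by (simp add: e_def dist_real_def pos_less_divide_eq)
    finally show "cnorm n (vsub (\<gamma> s) (\<gamma> t)) < r" by (simp add: \<gamma>_dist)
  qed
  moreover have "e > 0" unfolding e_def using r pos by simp
  ultimately show "\<exists>e>0. \<forall>s. dist s t < e \<longrightarrow> s \<in> {t. \<gamma> t \<in> W}" by auto
qed

lemma convex_imp_cconnected:
  assumes sub: "S \<subseteq> cvec n"
    and convex: "\<And>p q t. p \<in> S \<Longrightarrow> q \<in> S \<Longrightarrow> t \<in> {0..1} \<Longrightarrow>
              (\<lambda>i. p i + of_real t * (q i - p i)) \<in> S"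
  shows "cconnected n S"
  unfolding cconnected_def
proof (rule notI, elim exE conjE)
  fix U V assume U: "copen n U" and V: "copen n V" and cover: "S \<subseteq> U \<union> V"
    and disj: "U \<inter> V \<inter> S = {}" and "U \<inter> S \<noteq> {}" and "V \<inter> S \<noteq> {}"
  then obtain p q where p: "p \<in> U" "p \<in> S" and q: "q \<in> V" "q \<in> S" by blast
  define \<gamma> where "\<gamma> t = (\<lambda>i. p i + of_real t * (q i - p i))" for t :: real
  have open_preimage: "open {t. \<gamma> t \<in> W}" if "copen n W" for W
    unfolding \<gamma>_def using that p(2) q(2) sub by (intro open_segment_preimage) auto
  have in_S: "\<gamma> t \<in> S" if "t \<in> {0..1}" for t
    unfolding \<gamma>_def using convex[OF p(2) q(2) that] .
  have "{t. \<gamma> t \<in> U} \<inter> {0..1} = {} \<or> {t. \<gamma> t \<in> V} \<inter> {0..1} = {}"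
  proof (rule connectedD[OF connected_Icc open_preimage[OF U] open_preimage[OF V]])
    show "{t. \<gamma> t \<in> U} \<inter> {t. \<gamma> t \<in> V} \<inter> {0..1} = {}" using disj in_S by blast
    show "{0..1} \<subseteq> {t. \<gamma> t \<in> U} \<union> {t. \<gamma> t \<in> V}" using cover in_S by blast
  qed
  moreover have "\<gamma> 0 = p" "\<gamma> 1 = q" unfolding \<gamma>_def by auto
  ultimately show False using p q by force
qed

definition planar_preimage :: "nat \<Rightarrow> (complex \<times> complex) set \<Rightarrow> (nat \<Rightarrow> complex) set" where
  "planar_preimage n W = {z \<in> cvec n. (z 0, z 1) \<in> W}"

lemma cdomain_planar_preimage:
  assumes "open W" "convex W" "(0, 0) \<in> W"
  shows "cdomain n (planar_preimage n W)"
proof -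
  have "copen n (planar_preimage n W)"
    unfolding copen_def
  proof (intro conjI ballI)
    fix a assume a: "a \<in> planar_preimage n W"
    then obtain e where e: "e > 0" "ball (a 0, a 1) e \<subseteq> W"
      using assms(1) unfolding planar_preimage_def open_contains_ball by blast
    have "z \<in> planar_preimage n W" if z: "z \<in> cvec n" "cnorm n (vsub z a) < e / 2" for z
    proof -
      have close: "cmod (a i - z i) < e / 2" for i
        using cmod_le_cnorm[OF vsub_cvec[OF z(1)], of a i] a z(2)
        by (auto simp: planar_preimage_def vsub_def norm_minus_commute)
      have "dist (a 0, a 1) (z 0, z 1) \<le> cmod (a 0 - z 0) + cmod (a 1 - z 1)"
        using norm_Pair_le[of "a 0 - z 0" "a 1 - z 1"] by (simp add: dist_norm)
      then have "dist (a 0, a 1) (z 0, z 1) < e"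
        using close[of 0] close[of 1] by linarith
      then show ?thesis using e z unfolding planar_preimage_def by auto
    qed
    then show "\<exists>r>0. \<forall>z\<in>cvec n. cnorm n (vsub z a) < r \<longrightarrow> z \<in> planar_preimage n W"
      using e(1) by (intro exI[of _ "e / 2"]) auto
  qed (auto simp: planar_preimage_def)
  moreover have "cconnected n (planar_preimage n W)"
  proof (rule convex_imp_cconnected)
    fix p q and t :: real assume pq: "p \<in> planar_preimage n W" "q \<in> planar_preimage n W"
      and t: "t \<in> {0..1}"
    have "(p 0 + of_real t * (q 0 - p 0), p 1 + of_real t * (q 1 - p 1))
        = (1 - t) *\<^sub>R (p 0, p 1) + t *\<^sub>R (q 0, q 1)"
      by (simp add: scaleR_conv_of_real algebra_simps)
    also have "\<dots> \<in> W"
      using pq t assms(2) unfolding planar_preimage_def by (intro convexD_alt) auto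
    finally show "(\<lambda>i. p i + of_real t * (q i - p i)) \<in> planar_preimage n W"
      using pq convex_combination_cvec unfolding planar_preimage_def by auto
  qed (auto simp: planar_preimage_def)
  moreover have "(\<lambda>_. 0) \<in> planar_preimage n W"
    using assms(3) zero_cvec unfolding planar_preimage_def by auto
  ultimately show ?thesis unfolding cdomain_def by blast
qed

definition weighted_l1_ball :: "real \<Rightarrow> real \<Rightarrow> real \<Rightarrow> (complex \<times> complex) set" where
  "weighted_l1_ball a b c = {p. a * cmod (fst p) + b * cmod (snd p) < c}"

lemma open_weighted_l1_ball: "open (weighted_l1_ball a b c)"
  unfolding weighted_l1_ball_def by (intro open_Collect_less continuous_intros)

lemma convex_weighted_l1_ball:
  assumes "a \<ge> 0" "b \<ge> 0"
  shows "convex (weighted_l1_ball a b c)"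
  unfolding convex_alt weighted_l1_ball_def
proof (intro ballI allI impI, clarsimp)
  fix x y x' y' :: complex and u :: real
  assume xy: "a * cmod x + b * cmod y < c" and xy': "a * cmod x' + b * cmod y' < c"
    and u: "0 \<le> u" "u \<le> 1"
  have tri: "cmod ((1 - u) *\<^sub>R v + u *\<^sub>R v') \<le> (1 - u) * cmod v + u * cmod v'" for v v' :: complex
    using norm_triangle_ineq[of "(1 - u) *\<^sub>R v" "u *\<^sub>R v'"] u by simp
  have "a * cmod ((1 - u) *\<^sub>R x + u *\<^sub>R x') + b * cmod ((1 - u) *\<^sub>R y + u *\<^sub>R y')
      \<le> (1 - u) * (a * cmod x + b * cmod y) + u * (a * cmod x' + b * cmod y')"
    using mult_left_mono[OF tri[of x x'] assms(1)] mult_left_mono[OF tri[of y y'] assms(2)]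
    by (simp add: algebra_simps)
  also have "\<dots> < c"
    using xy xy' u by (cases "u = 0") (auto intro: convex_bound_lt)
  finally show "a * cmod ((1 - u) *\<^sub>R x + u *\<^sub>R x') + b * cmod ((1 - u) *\<^sub>R y + u *\<^sub>R y') < c" .
qed

abbreviation origin :: "nat \<Rightarrow> complex" where
  "origin \<equiv> \<lambda>_. 0"

definition disc_cylinder :: "nat \<Rightarrow> (nat \<Rightarrow> complex) set" where
  "disc_cylinder n = planar_preimage n (weighted_l1_ball 1 0 1)"

definition truncated_cylinder :: "nat \<Rightarrow> real \<Rightarrow> (nat \<Rightarrow> complex) set" where
  "truncated_cylinder n r = planar_preimage n
     (weighted_l1_ball 1 0 1 \<inter> weighted_l1_ball 0 1 r \<inter> weighted_l1_ball 1 (1 / r) (3 / 2))"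

lemma mem_disc_cylinder: "z \<in> disc_cylinder n \<longleftrightarrow> z \<in> cvec n \<and> cmod (z 0) < 1"
  unfolding disc_cylinder_def planar_preimage_def weighted_l1_ball_def by simp

lemma mem_truncated_cylinder:
  "z \<in> truncated_cylinder n r \<longleftrightarrow>
     z \<in> cvec n \<and> cmod (z 0) < 1 \<and> cmod (z 1) < r \<and> cmod (z 0) + cmod (z 1) / r < 3 / 2"
  unfolding truncated_cylinder_def planar_preimage_def weighted_l1_ball_def by auto

lemma unit_disc_eq_disc_cylinder: "unit_disc = disc_cylinder 1"
  unfolding unit_disc_def by (auto simp: mem_disc_cylinder)

lemma cdomain_disc_cylinder: "cdomain n (disc_cylinder n)"
  unfolding disc_cylinder_def
  by (intro cdomain_planar_preimage open_weighted_l1_ball convex_weighted_l1_ball)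
    (auto simp: weighted_l1_ball_def)

lemma cdomain_truncated_cylinder: "r > 0 \<Longrightarrow> cdomain n (truncated_cylinder n r)"
  unfolding truncated_cylinder_def
  by (intro cdomain_planar_preimage open_Int convex_Int open_weighted_l1_ball convex_weighted_l1_ball)
    (auto simp: weighted_l1_ball_def)

lemma truncated_cylinder_mono:
  assumes "0 < r" "r \<le> r'"
  shows "truncated_cylinder n r \<subseteq> truncated_cylinder n r'"
proof
  fix z assume z: "z \<in> truncated_cylinder n r"
  have "cmod (z 1) / r' \<le> cmod (z 1) / r"
    using assms by (intro divide_left_mono) auto
  with z assms show "z \<in> truncated_cylinder n r'"
    unfolding mem_truncated_cylinder by linarith
qed

lemma Union_truncated_cylinder:
  "(\<Union>m. truncated_cylinder n (real (Suc m))) = disc_cylinder n"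
proof (intro equalityI subsetI)
  fix z assume "z \<in> disc_cylinder n"
  moreover obtain m :: nat where m: "2 * cmod (z 1) < real m"
    using reals_Archimedean2 by blast
  moreover have "cmod (z 1) / real (Suc m) < 1 / 2"
    using m by (simp add: divide_less_eq)
  moreover have "cmod (z 1) < real (Suc m)"
    using m by linarith
  ultimately have "z \<in> truncated_cylinder n (real (Suc m))"
    unfolding mem_disc_cylinder mem_truncated_cylinder by linarith
  then show "z \<in> (\<Union>m. truncated_cylinder n (real (Suc m)))" by blast
qed (auto simp: mem_disc_cylinder mem_truncated_cylinder)

section \<open>Contractible pseudometrics at the origin\<close>

lemma hol_contractibleD:
  assumes "hol_contractible \<alpha>"
  shows "\<And>n D. n \<ge> 1 \<Longrightarrow> cdomain n D \<Longrightarrow> pseudometric n D (\<alpha> n D)"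
    and "\<And>z X. z \<in> unit_disc \<Longrightarrow> X \<in> cvec 1 \<Longrightarrow>
           \<alpha> 1 unit_disc z X = cmod (X 0) / (1 - (cmod (z 0))\<^sup>2)"
    and "\<And>n1 n2 D1 D2 F L z X. n1 \<ge> 1 \<Longrightarrow> n2 \<ge> 1 \<Longrightarrow> cdomain n1 D1 \<Longrightarrow> cdomain n2 D2 \<Longrightarrow>
           cholo n1 n2 F D1 D2 \<Longrightarrow> z \<in> D1 \<Longrightarrow> X \<in> cvec n1 \<Longrightarrow> chas_deriv n1 n2 F L z \<Longrightarrow>
           \<alpha> n2 D2 (F z) (L X) \<le> \<alpha> n1 D1 z X"
  using assms unfolding hol_contractible_def by blast+

lemma origin_unit_disc: "origin \<in> unit_disc"
  by (simp add: unit_disc_eq_disc_cylinder mem_disc_cylinder zero_cvec)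

lemma contractible_ge_linear_functional:
  assumes hc: "hol_contractible \<alpha>" and n: "n \<ge> 1"
    and S: "cdomain n S" "origin \<in> S" and X: "X \<in> cvec n"
    and additive: "\<And>z h. f (vadd z h) = f z + f h"
    and homogeneous: "\<And>c z. f (vscale c z) = c * f z"
    and bounded: "\<And>z. z \<in> S \<Longrightarrow> cmod (f z) < 1"
  shows "cmod (f X) \<le> \<alpha> n S origin X"
proof -
  define P where "P z = (\<lambda>i::nat. if i = 0 then f z else 0)" for z
  have P_add: "P (vadd z h) = vadd (P z) (P h)" for z h
    unfolding P_def additive by (auto simp: vadd_def)
  have "clinear n 1 P"
    using P_add homogeneous unfolding clinear_def by (auto simp: cvec_def P_def vscale_def)
  then have deriv: "chas_deriv n 1 P P z" for z
    using P_add by (rule chas_deriv_linear)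
  have "cholo n 1 P S unit_disc"
    unfolding cholo_def unit_disc_def using deriv bounded by (auto simp: P_def cvec_def)
  then have "\<alpha> 1 unit_disc (P origin) (P X) \<le> \<alpha> n S origin X"
    using hol_contractibleD(3)[OF hc n _ S(1) _ _ S(2) X deriv] cdomain_disc_cylinder
    by (simp add: unit_disc_eq_disc_cylinder)
  moreover have "f origin = 0"
    using homogeneous[of 0 origin] by (simp add: vscale_def)
  then have "P origin = origin" by (auto simp: P_def)
  moreover have "P X \<in> cvec 1" by (auto simp: P_def cvec_def)
  ultimately show ?thesis
    using hol_contractibleD(2)[OF hc origin_unit_disc] by (simp add: P_def)
qed

lemma contractible_le_of_disc:
  assumes hc: "hol_contractible \<alpha>" and n: "n \<ge> 1"
    and S: "cdomain n S" "origin \<in> S" and X: "X \<in> cvec n" and N: "N > 0"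
    and disc: "\<And>c. cmod c < 1 \<Longrightarrow> vscale (c / of_real N) X \<in> S"
  shows "\<alpha> n S origin X \<le> N"
proof -
  define F where "F l = vscale (l 0 / of_real N) X" for l :: "nat \<Rightarrow> complex"
  have F_add: "F (vadd z h) = vadd (F z) (F h)" for z h
    unfolding F_def vadd_def vscale_def by (auto simp: algebra_simps add_divide_distrib)
  have "clinear 1 n F"
    using X F_add unfolding clinear_def F_def by (auto simp: cvec_def vscale_def)
  then have deriv: "chas_deriv 1 n F F z" for z
    using F_add by (rule chas_deriv_linear)
  have "cholo 1 n F unit_disc S"
    unfolding cholo_def F_def unit_disc_def using disc deriv[unfolded F_def] by auto
  moreover have e0: "unitvec 0 \<in> cvec 1" by (simp add: unitvec_cvec)
  ultimately have "\<alpha> n S (F origin) (F (unitvec 0)) \<le> \<alpha> 1 unit_disc origin (unitvec 0)"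
    using hol_contractibleD(3)[OF hc _ n _ S(1) _ origin_unit_disc e0 deriv] cdomain_disc_cylinder
    by (simp add: unit_disc_eq_disc_cylinder)
  moreover have "F origin = origin" "F (unitvec 0) = vscale (of_real (1 / N)) X"
    unfolding F_def unitvec_def vscale_def by auto
  moreover have "\<alpha> 1 unit_disc origin (unitvec 0) = 1"
    using hol_contractibleD(2)[OF hc origin_unit_disc e0] by (simp add: unitvec_def)
  moreover have "\<alpha> n S origin (vscale (of_real (1 / N)) X) = \<alpha> n S origin X / N"
    using hol_contractibleD(1)[OF hc n S(1)] S(2) X N unfolding pseudometric_def by (simp add: norm_divide)
  ultimately show ?thesis using N by (simp add: divide_le_eq)
qed

lemma contractible_disc_cylinder_origin:
  assumes hc: "hol_contractible \<alpha>" and n: "n \<ge> 1" and X: "X \<in> cvec n"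
  shows "\<alpha> n (disc_cylinder n) origin X = cmod (X 0)"
proof (rule antisym)
  have origin: "origin \<in> disc_cylinder n"
    by (simp add: mem_disc_cylinder zero_cvec)
  show "\<alpha> n (disc_cylinder n) origin X \<le> cmod (X 0)"
  proof (rule dense_ge)
    fix N assume N: "cmod (X 0) < N"
    show "\<alpha> n (disc_cylinder n) origin X \<le> N"
    proof (rule contractible_le_of_disc[OF hc n cdomain_disc_cylinder origin X])
      show N_pos: "N > 0" using N norm_ge_zero[of "X 0"] by linarith
      fix c :: complex assume c: "cmod c < 1"
      have "cmod c * cmod (X 0) \<le> cmod (X 0)"
        using c by (simp add: mult_left_le_one_le)
      then have "cmod (c / of_real N * X 0) \<le> cmod (X 0) / N"
        using N_pos by (simp add: norm_mult norm_divide divide_right_mono)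
      also have "\<dots> < 1"
        using N N_pos by simp
      finally show "vscale (c / of_real N) X \<in> disc_cylinder n"
        using X by (auto simp: mem_disc_cylinder vscale_def cvec_def)
    qed
  qed
  show "cmod (X 0) \<le> \<alpha> n (disc_cylinder n) origin X"
    by (rule contractible_ge_linear_functional[OF hc n cdomain_disc_cylinder origin X])
      (auto simp: vadd_def vscale_def mem_disc_cylinder)
qed

text \<open>The Minkowski functional of \<open>truncated_cylinder n r\<close> in the first two coordinates.\<close>

definition hexagon_norm :: "real \<Rightarrow> (nat \<Rightarrow> complex) \<Rightarrow> real" where
  "hexagon_norm r X =
     max (max (cmod (X 0)) (cmod (X 1) / r)) (2 / 3 * (cmod (X 0) + cmod (X 1) / r))"

lemma hexagon_norm_nonneg: "hexagon_norm r X \<ge> 0"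
  unfolding hexagon_norm_def by (simp add: le_max_iff_disj)

lemma exists_unimodular_aligning:
  fixes x y :: complex
  shows "\<exists>\<omega>. cmod \<omega> = 1 \<and> cmod (x + \<omega> * y) = cmod x + cmod y"
proof (cases "x = 0 \<or> y = 0")
  case True
  then show ?thesis by (auto intro!: exI[of _ 1])
next
  case False
  have "cnj y * y = of_real (cmod y) * of_real (cmod y)"
    by (metis complex_norm_square mult.commute of_real_mult power2_eq_square)
  then have "x + sgn x * cnj (sgn y) * y = sgn x * of_real (cmod x + cmod y)"
    using False by (simp add: sgn_eq field_simps)
  then show ?thesis
    using False by (intro exI[of _ "sgn x * cnj (sgn y)"]) (simp add: norm_mult norm_sgn flip: of_real_add)
qed

lemma contractible_truncated_cylinder_origin_le:
  assumes hc: "hol_contractible \<alpha>" and n: "n \<ge> 1" and r: "r > 0" and X: "X \<in> cvec n"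
  shows "\<alpha> n (truncated_cylinder n r) origin X \<le> hexagon_norm r X"
proof (rule dense_ge)
  fix N assume N: "hexagon_norm r X < N"
  then have bounds: "cmod (X 0) < N" "cmod (X 1) / r < N" "2 / 3 * (cmod (X 0) + cmod (X 1) / r) < N"
    unfolding hexagon_norm_def by auto
  show "\<alpha> n (truncated_cylinder n r) origin X \<le> N"
  proof (rule contractible_le_of_disc[OF hc n cdomain_truncated_cylinder[OF r] _ X])
    show "origin \<in> truncated_cylinder n r"
      using r by (simp add: mem_truncated_cylinder zero_cvec)
    show N_pos: "N > 0" using bounds(1) norm_ge_zero[of "X 0"] by linarith
    fix c :: complex assume c: "cmod c < 1"
    have shrink: "cmod (c / of_real N * X i) \<le> cmod (X i) / N" for i
    proof -
      have "cmod c * cmod (X i) \<le> cmod (X i)"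
        using c by (simp add: mult_left_le_one_le)
      then show ?thesis
        using N_pos by (simp add: norm_mult norm_divide divide_right_mono)
    qed
    have "cmod (c / of_real N * X 1) / r \<le> cmod (X 1) / N / r"
      using r by (intro divide_right_mono shrink) simp
    moreover have "cmod (X 0) / N < 1" "cmod (X 1) / N < r"
      "cmod (X 0) / N + cmod (X 1) / N / r < 3 / 2"
      using bounds N_pos r by (simp_all add: field_simps)
    ultimately have "cmod (c / of_real N * X 0) < 1" "cmod (c / of_real N * X 1) < r"
      "cmod (c / of_real N * X 0) + cmod (c / of_real N * X 1) / r < 3 / 2"
      using shrink[of 0] shrink[of 1] by linarith+
    then show "vscale (c / of_real N) X \<in> truncated_cylinder n r"
      using X unfolding mem_truncated_cylinder vscale_def by (auto simp: cvec_def)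
  qed
qed

lemma contractible_truncated_cylinder_origin_ge:
  assumes hc: "hol_contractible \<alpha>" and n: "n \<ge> 1" and r: "r > 0" and X: "X \<in> cvec n"
  shows "hexagon_norm r X \<le> \<alpha> n (truncated_cylinder n r) origin X"
proof -
  note G = cdomain_truncated_cylinder[OF r]
  have origin: "origin \<in> truncated_cylinder n r"
    using r by (simp add: mem_truncated_cylinder zero_cvec)
  have functional: "cmod (f X) \<le> \<alpha> n (truncated_cylinder n r) origin X"
    if "\<And>z h. f (vadd z h) = f z + f h" "\<And>c z. f (vscale c z) = c * f z"
       "\<And>z. z \<in> truncated_cylinder n r \<Longrightarrow> cmod (f z) < 1" for f
    using contractible_ge_linear_functional[OF hc n G origin X] that by blast
  have first: "cmod (X 0) \<le> \<alpha> n (truncated_cylinder n r) origin X"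
    by (rule functional) (auto simp: vadd_def vscale_def mem_truncated_cylinder)
  have second: "cmod (X 1 / of_real r) \<le> \<alpha> n (truncated_cylinder n r) origin X"
    using r by (intro functional)
      (auto simp: vadd_def vscale_def add_divide_distrib norm_divide mem_truncated_cylinder)
  obtain \<omega> where \<omega>: "cmod \<omega> = 1"
    "cmod (X 0 + \<omega> * (X 1 / of_real r)) = cmod (X 0) + cmod (X 1 / of_real r)"
    using exists_unimodular_aligning by blast
  have "2 / 3 * (cmod (X 0) + cmod (X 1) / r) = cmod (2 / 3 * (X 0 + \<omega> * (X 1 / of_real r)))"
    unfolding norm_mult \<omega>(2) using r by (simp add: norm_divide)
  also have "\<dots> \<le> \<alpha> n (truncated_cylinder n r) origin X"
  proof (rule functional)
    fix z assume "z \<in> truncated_cylinder n r"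
    then have "cmod (z 0) + cmod (z 1) / r < 3 / 2"
      by (simp add: mem_truncated_cylinder)
    moreover have "cmod (z 0 + \<omega> * (z 1 / of_real r)) \<le> cmod (z 0) + cmod (z 1) / r"
      using norm_triangle_ineq[of "z 0" "\<omega> * (z 1 / of_real r)"] \<omega>(1) r
      by (simp add: norm_mult norm_divide)
    ultimately show "cmod (2 / 3 * (z 0 + \<omega> * (z 1 / of_real r))) < 1"
      unfolding norm_mult by (simp add: field_simps)
  qed (auto simp: vadd_def vscale_def algebra_simps add_divide_distrib)
  finally show "hexagon_norm r X \<le> \<alpha> n (truncated_cylinder n r) origin X"
    using first second r unfolding hexagon_norm_def by (simp add: norm_divide)
qed

lemma contractible_truncated_cylinder_origin:
  assumes hc: "hol_contractible \<alpha>" and n: "n \<ge> 1" and r: "r > 0" and X: "X \<in> cvec n"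
  shows "\<alpha> n (truncated_cylinder n r) origin X = hexagon_norm r X"
  using contractible_truncated_cylinder_origin_le[OF assms]
    contractible_truncated_cylinder_origin_ge[OF assms] by (rule antisym)

section \<open>Hermitian forms\<close>

lemma hform_add_left: "hform n H (vadd X Y) Z = hform n H X Z + hform n H Y Z"
  unfolding hform_def vadd_def by (simp add: algebra_simps sum.distrib)

lemma hform_add_right: "hform n H Z (vadd X Y) = hform n H Z X + hform n H Z Y"
  unfolding hform_def vadd_def by (simp add: algebra_simps sum.distrib)

lemma hform_scale_left: "hform n H (vscale c X) Z = c * hform n H X Z"
  unfolding hform_def vscale_def by (simp add: algebra_simps sum_distrib_left)

lemma hform_scale_right: "hform n H Z (vscale c X) = cnj c * hform n H Z X"
  unfolding hform_def vscale_def by (simp add: algebra_simps sum_distrib_left)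

lemma hform_unitvec: "i < n \<Longrightarrow> j < n \<Longrightarrow> hform n H (unitvec i) (unitvec j) = H i j"
  unfolding hform_def unitvec_def
  by (simp add: if_distrib[of cnj] if_distrib[of "(*) _"] cong: if_cong)

lemma hform_two_unitvec:
  assumes "i < n" "j < n"
  shows "hform n H (vadd (vscale s (unitvec i)) (vscale t (unitvec j)))
                   (vadd (vscale s (unitvec i)) (vscale t (unitvec j)))
    = s * cnj s * H i i + s * cnj t * H i j + t * cnj s * H j i + t * cnj t * H j j"
  using assms
  by (simp add: hform_add_left hform_add_right hform_scale_left hform_scale_right hform_unitvec
      algebra_simps)

lemma two_unitvec_cvec:
  "i < n \<Longrightarrow> j < n \<Longrightarrow> vadd (vscale s (unitvec i)) (vscale t (unitvec j)) \<in> cvec n"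
  unfolding vadd_def vscale_def unitvec_def cvec_def by auto

lemma hform_truncate:
  assumes "k \<le> n"
    and "\<And>i j. i < n \<Longrightarrow> j < n \<Longrightarrow> i \<ge> k \<or> j \<ge> k \<Longrightarrow> H i j * X i * cnj (Y j) = 0"
  shows "hform n H X Y = hform k H X Y"
proof -
  have "hform n H X Y = (\<Sum>i<n. \<Sum>j<k. H i j * X i * cnj (Y j))"
    unfolding hform_def
  proof (rule sum.cong[OF refl], rule sum.mono_neutral_right)
    fix i assume "i \<in> {..<n}"
    then show "\<forall>j\<in>{..<n} - {..<k}. H i j * X i * cnj (Y j) = 0"
      using assms(2) by auto
  qed (use assms(1) in auto)
  also have "\<dots> = hform k H X Y"
    unfolding hform_def
  proof (rule sum.mono_neutral_right)
    show "\<forall>i\<in>{..<n} - {..<k}. (\<Sum>j<k. H i j * X i * cnj (Y j)) = 0"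
      using assms by (auto intro!: sum.neutral)
  qed (use assms(1) in auto)
  finally show ?thesis .
qed

lemma hform_truncate_cvec:
  "k \<le> n \<Longrightarrow> X \<in> cvec k \<Longrightarrow> Y \<in> cvec k \<Longrightarrow> hform n H X Y = hform k H X Y"
  by (intro hform_truncate) (auto simp: cvec_def)

lemma hform_truncate_matrix:
  "k \<le> n \<Longrightarrow> (\<And>i j. i \<ge> k \<or> j \<ge> k \<Longrightarrow> H i j = 0) \<Longrightarrow> hform n H X Y = hform k H X Y"
  by (intro hform_truncate) auto

lemma hform_1: "hform 1 H X Y = H 0 0 * X 0 * cnj (Y 0)"
  unfolding hform_def by simp

lemma hform_2:
  "hform 2 H X Y = H 0 0 * X 0 * cnj (Y 0) + H 0 1 * X 0 * cnj (Y 1)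
                 + H 1 0 * X 1 * cnj (Y 0) + H 1 1 * X 1 * cnj (Y 1)"
  unfolding hform_def by (simp add: numeral_2_eq_2 lessThan_Suc)

lemma psd_hermitian_diag_real: "psd_hermitian n H \<Longrightarrow> H i i = of_real (Re (H i i))"
  unfolding psd_hermitian_def
  by (metis cnj.simps(2) complex_is_Real_iff neg_equal_zero of_real_Re)

lemma psd_hermitian_diag_nonneg:
  assumes "psd_hermitian n H" "i < n"
  shows "Re (H i i) \<ge> 0"
proof -
  have "Re (hform n H (unitvec i) (unitvec i)) \<ge> 0"
    using assms unitvec_cvec unfolding psd_hermitian_def by blast
  then show ?thesis using hform_unitvec assms(2) by metis
qed

lemma psd_hermitian_zero_diag_col:
  assumes psd: "psd_hermitian n H" and i: "i < n" and zero: "H i i = 0"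
  shows "H j i = 0"
proof (cases "j < n \<and> j \<noteq> i")
  case True
  define w where "w = H j i"
  define h where "h = Re (H j j)"
  define s where "s = 1 / (h + 1)"
  have h: "h \<ge> 0" "H j j = of_real h"
    unfolding h_def using True psd_hermitian_diag_nonneg[OF psd] psd_hermitian_diag_real[OF psd]
    by blast+
  have s: "s > 0" "s * h < 1"
    using h unfolding s_def by (auto simp: field_simps)
  have Hij: "H i j = cnj w"
    using psd unfolding psd_hermitian_def w_def by metis
  \<comment> \<open>otherwise \<open>t e\<^sub>j + e\<^sub>i\<close> would have negative square for this small \<open>t\<close>\<close>
  define t where "t = - of_real s * cnj w"
  have "0 \<le> Re (hform n H (vadd (vscale t (unitvec j)) (vscale 1 (unitvec i)))
                            (vadd (vscale t (unitvec j)) (vscale 1 (unitvec i))))"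
    using psd two_unitvec_cvec True i unfolding psd_hermitian_def by blast
  also have "\<dots> = Re (t * cnj t * of_real h + t * w + cnj t * cnj w)"
    using True i zero h(2) Hij by (simp add: hform_two_unitvec w_def)
  also have "\<dots> = s * (s * h - 2) * (cmod w)\<^sup>2"
  proof -
    have "w * cnj w = of_real ((cmod w)\<^sup>2)"
      by (simp add: complex_norm_square del: of_real_power)
    moreover have "t * cnj t * of_real h + t * w + cnj t * cnj w
        = of_real (s * (s * h - 2)) * (w * cnj w)"
      unfolding t_def by (simp add: algebra_simps)
    ultimately show ?thesis by simp
  qed
  finally have "0 \<le> s * (s * h - 2) * (cmod w)\<^sup>2" .
  moreover have "s * (s * h - 2) < 0"
    using s by (intro mult_pos_neg) auto
  ultimately have "(cmod w)\<^sup>2 \<le> 0"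
    using mult_neg_pos[of "s * (s * h - 2)" "(cmod w)\<^sup>2"] by linarith
  then show ?thesis unfolding w_def by simp
next
  case False
  then consider "j = i" | "j \<ge> n" by linarith
  then show ?thesis
    using psd zero unfolding psd_hermitian_def by cases blast+
qed

section \<open>The Wu construction for coordinate pseudometrics\<close>

lemma F_set_vanishing_entries:
  assumes H: "H \<in> F_set n \<eta> a" and k: "k \<le> n"
    and vanish: "\<And>X. X \<in> cvec n \<Longrightarrow> \<forall>i<k. X i = 0 \<Longrightarrow> \<eta> a X = 0"
    and ij: "i \<ge> k \<or> j \<ge> k"
  shows "H i j = 0"
proof -
  have psd: "psd_hermitian n H"
    and bound: "\<And>X. X \<in> cvec n \<Longrightarrow> sqrt (Re (hform n H X X)) \<le> \<eta> a X"
    using H unfolding F_set_def by auto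
  have outside: "H l m = 0" "H m l = 0" if "l \<ge> n" for l m
    using psd that unfolding psd_hermitian_def by blast+
  have hermitian: "H l m = cnj (H m l)" for l m
    using psd unfolding psd_hermitian_def by metis
  have diag: "H l l = 0" if l: "k \<le> l" "l < n" for l
  proof -
    have "unitvec l \<in> cvec n" "\<forall>i<k. unitvec l i = 0"
      using l by (simp_all add: unitvec_cvec) (simp add: unitvec_def)
    then have "sqrt (Re (H l l)) \<le> 0"
      using bound vanish hform_unitvec[OF l(2) l(2)] by metis
    then have "Re (H l l) = 0"
      using psd_hermitian_diag_nonneg[OF psd l(2)] by simp
    then show ?thesis
      using psd_hermitian_diag_real[OF psd, of l] by simp
  qed
  have "H m l = 0 \<and> H l m = 0" if "k \<le> l" for l m
  proof (cases "l < n")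
    case True
    then have "H m l = 0"
      using psd_hermitian_zero_diag_col[OF psd True diag[OF that True]] by blast
    then show ?thesis using hermitian[of l m] by simp
  qed (use outside in auto)
  then show ?thesis using ij by blast
qed

lemma hat_metric_pos:
  assumes "cseminorm n p" "\<forall>Y\<in>cvec n. p Y \<le> \<eta> a Y" "X \<in> cvec n" "p X > 0"
  shows "hat_metric n \<eta> a X > 0"
proof -
  let ?S = "{p X | p. cseminorm n p \<and> (\<forall>Y\<in>cvec n. p Y \<le> \<eta> a Y)}"
  have "bdd_above ?S" using assms(3) by (intro bdd_aboveI[of _ "\<eta> a X"]) auto
  moreover have "p X \<in> ?S" using assms by auto
  ultimately have "p X \<le> Sup ?S" by (rule cSup_upper[rotated])
  then show ?thesis unfolding hat_metric_def using assms(4) by simp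
qed

lemma hat_metric_zero:
  assumes "X \<in> cvec n" "\<eta> a X = 0" "\<forall>Y\<in>cvec n. \<eta> a Y \<ge> 0"
  shows "hat_metric n \<eta> a X = 0"
proof -
  let ?S = "{p X | p. cseminorm n p \<and> (\<forall>Y\<in>cvec n. p Y \<le> \<eta> a Y)}"
  have "p X = 0" if "cseminorm n p" "\<forall>Y\<in>cvec n. p Y \<le> \<eta> a Y" for p
    using that assms(1,2) unfolding cseminorm_def by (metis order_antisym)
  moreover have "0 \<in> ?S"
    using assms(3) by (intro CollectI exI[of _ "\<lambda>_. 0"]) (simp add: cseminorm_def)
  ultimately have "?S = {0}"
    by blast
  then show ?thesis unfolding hat_metric_def by simp
qed

lemma cseminorm_coordinate: "c \<ge> 0 \<Longrightarrow> cseminorm n (\<lambda>X. c * cmod (X k))"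
  unfolding cseminorm_def vadd_def vscale_def
  by (auto simp: norm_mult norm_triangle_ineq distrib_left[symmetric] intro!: mult_left_mono)

lemma V_set_eq_coordinate_kernel:
  assumes vanish: "\<And>X. X \<in> cvec n \<Longrightarrow> \<forall>i<k. X i = 0 \<Longrightarrow> \<eta> a X = 0"
    and dominate: "\<And>i. i < k \<Longrightarrow> \<exists>c>0. \<forall>Y\<in>cvec n. c * cmod (Y i) \<le> \<eta> a Y"
    and nonneg: "\<forall>Y\<in>cvec n. \<eta> a Y \<ge> 0"
  shows "V_set n \<eta> a = {X \<in> cvec n. \<forall>i<k. X i = 0}"
proof (intro set_eqI iffI)
  fix X assume X: "X \<in> V_set n \<eta> a"
  have "X i = 0" if i: "i < k" for i
  proof (rule ccontr)
    assume "X i \<noteq> 0"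
    obtain c where "c > 0" "\<forall>Y\<in>cvec n. c * cmod (Y i) \<le> \<eta> a Y"
      using dominate[OF i] by blast
    with \<open>X i \<noteq> 0\<close> X have "hat_metric n \<eta> a X > 0"
      by (intro hat_metric_pos[OF cseminorm_coordinate]) (auto simp: V_set_def)
    with X show False unfolding V_set_def by simp
  qed
  then show "X \<in> {X \<in> cvec n. \<forall>i<k. X i = 0}" using X unfolding V_set_def by auto
qed (auto simp: V_set_def vanish nonneg hat_metric_zero)

lemma cinner_unitvec: "i < n \<Longrightarrow> cinner n (unitvec i) Y = cnj (Y i)"
  unfolding cinner_def unitvec_def by (simp add: if_distrib[of "\<lambda>x. x * _"] cong: if_cong)

lemma U_set_eq_cvec:
  assumes V: "V_set n \<eta> a = {X \<in> cvec n. \<forall>i<k. X i = 0}" and k: "k \<le> n"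
  shows "U_set n \<eta> a = cvec k"
proof (intro set_eqI iffI)
  fix Y assume Y: "Y \<in> U_set n \<eta> a"
  have "Y i = 0" if i: "i \<ge> k" for i
  proof (cases "i < n")
    case True
    then have "unitvec i \<in> V_set n \<eta> a"
      unfolding V using i by (simp add: unitvec_cvec) (simp add: unitvec_def)
    then show ?thesis
      using Y cinner_unitvec[OF True] unfolding U_set_def by force
  qed (use Y in \<open>auto simp: U_set_def cvec_def\<close>)
  then show "Y \<in> cvec k" unfolding cvec_def by auto
next
  fix Y assume Y: "Y \<in> cvec k"
  have "cinner n X Y = 0" if "X \<in> V_set n \<eta> a" for X
  proof -
    have "X i * cnj (Y i) = 0" for i
      using that Y unfolding V cvec_def by (cases "i < k") auto
    then show ?thesis unfolding cinner_def by (simp add: sum.neutral)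
  qed
  then show "Y \<in> U_set n \<eta> a"
    using Y k unfolding U_set_def cvec_def by auto
qed

lemma sum_unitvec: "(\<Sum>j<k. c j * unitvec j i) = (if i < k then c i else 0)"
proof -
  have "(\<Sum>j<k. c j * unitvec j i) = (\<Sum>j<k. if j = i then c i else 0)"
    by (rule sum.cong) (auto simp: unitvec_def)
  then show ?thesis by simp
qed

lemma is_basis_unitvec: "is_basis n (cvec k) k unitvec"
  unfolding is_basis_def
proof (intro conjI allI impI ballI)
  fix c assume "\<forall>i. (\<Sum>j<k. c j * unitvec j i) = 0"
  then show "\<And>j. j < k \<Longrightarrow> c j = 0" unfolding sum_unitvec by metis
next
  fix Y assume "Y \<in> cvec k"
  then show "\<exists>c. Y = (\<lambda>i. \<Sum>j<k. c j * unitvec j i)"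
    by (intro exI[of _ Y]) (auto simp: sum_unitvec cvec_def)
qed (simp add: unitvec_cvec)

lemma is_basis_independent_prefix:
  assumes "is_basis n S k e" "m \<le> k" "\<And>i. (\<Sum>j<m. c j * e j i) = 0"
  shows "\<forall>j<m. c j = 0"
proof -
  define c' where "c' j = (if j < m then c j else 0)" for j
  have "(\<Sum>j<k. c' j * e j i) = (\<Sum>j<m. c j * e j i)" for i
    using assms(2) unfolding c'_def by (intro sum.mono_neutral_cong_right) auto
  then have "\<forall>j<k. c' j = 0"
    using assms(1,3) unfolding is_basis_def by metis
  then show ?thesis using assms(2) unfolding c'_def by (metis order_less_le_trans)
qed

lemma complex_2x3_nontrivial_kernel:
  fixes a b c a' b' c' :: complex
  shows "\<exists>x y z. (x, y, z) \<noteq> (0, 0, 0) \<and> x * a + y * b + z * c = 0 \<and> x * a' + y * b' + z * c' = 0"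
proof (cases "a * b' - a' * b = 0")
  case False
  \<comment> \<open>the cross product of the two rows\<close>
  then show ?thesis
    by (intro exI[of _ "b * c' - b' * c"] exI[of _ "c * a' - c' * a"] exI[of _ "a * b' - a' * b"])
      (simp add: algebra_simps)
next
  case True
  consider "a = 0" "a' = 0" | "a \<noteq> 0" | "a' \<noteq> 0" by blast
  then show ?thesis
  proof cases
    case 1
    then show ?thesis by (intro exI[of _ 1] exI[of _ 0]) simp
  next
    case 2
    then show ?thesis
      using True by (intro exI[of _ "- b"] exI[of _ a] exI[of _ 0]) (simp add: algebra_simps)
  next
    case 3
    then show ?thesis
      using True by (intro exI[of _ "- b'"] exI[of _ a'] exI[of _ 0]) (simp add: algebra_simps)
  qed
qed

lemma is_basis_cvec1_le:
  assumes basis: "is_basis n (cvec 1) k e"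
  shows "k \<le> 1"
proof (rule ccontr)
  assume "\<not> k \<le> 1"
  obtain x y z where "(x, y, z) \<noteq> (0, 0, 0)"
    "x * e 0 0 + y * e 1 0 + z * 0 = 0" "x * 0 + y * 0 + z * 1 = 0"
    using complex_2x3_nontrivial_kernel[where a = "e 0 0" and b = "e 1 0" and c = 0
        and a' = 0 and b' = 0 and c' = 1]
    by blast
  then have nonzero: "(x, y) \<noteq> (0, 0)" and row: "x * e 0 0 + y * e 1 0 = 0"
    by auto
  have "e j \<in> cvec 1" if "j < 2" for j
    using basis that \<open>\<not> k \<le> 1\<close> unfolding is_basis_def by simp
  then have vanish: "e j i = 0" if "j < 2" "i \<ge> 1" for i j
    using that unfolding cvec_def by blast
  have "(\<Sum>j<2. [x, y] ! j * e j i) = 0" for i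
  proof (cases "i = 0")
    case False
    then show ?thesis using vanish[of 0 i] vanish[of 1 i] by (simp add: numeral_2_eq_2)
  qed (use row in \<open>simp add: numeral_2_eq_2\<close>)
  then have "\<forall>j<2. [x, y] ! j = 0"
    using \<open>\<not> k \<le> 1\<close> by (intro is_basis_independent_prefix[OF basis]) auto
  then have "x = 0" "y = 0"
    using spec[of "\<lambda>j. j < 2 \<longrightarrow> [x, y] ! j = 0" 0]
      spec[of "\<lambda>j. j < 2 \<longrightarrow> [x, y] ! j = 0" 1] by simp_all
  then show False using nonzero by simp
qed

lemma is_basis_cvec2_le:
  assumes basis: "is_basis n (cvec 2) k e"
  shows "k \<le> 2"
proof (rule ccontr)
  assume "\<not> k \<le> 2"
  obtain x y z where nonzero: "(x, y, z) \<noteq> (0, 0, 0)"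
    and rows: "x * e 0 0 + y * e 1 0 + z * e 2 0 = 0" "x * e 0 1 + y * e 1 1 + z * e 2 1 = 0"
    using complex_2x3_nontrivial_kernel[where a = "e 0 0" and b = "e 1 0" and c = "e 2 0"
        and a' = "e 0 1" and b' = "e 1 1" and c' = "e 2 1"]
    by blast
  have "e j \<in> cvec 2" if "j < 3" for j
    using basis that \<open>\<not> k \<le> 2\<close> unfolding is_basis_def by simp
  then have vanish: "e j i = 0" if "j < 3" "i \<ge> 2" for i j
    using that unfolding cvec_def by blast
  have "(\<Sum>j<3. [x, y, z] ! j * e j i) = 0" for i
  proof -
    consider "i = 0" | "i = 1" | "i \<ge> 2" by linarith
    then show ?thesis
    proof cases
      case 3
      then show ?thesis
        using vanish[of 0 i] vanish[of 1 i] vanish[of 2 i] by (simp add: eval_nat_numeral)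
    qed (use rows in \<open>simp_all add: eval_nat_numeral\<close>)
  qed
  then have "\<forall>j<3. [x, y, z] ! j = 0"
    using \<open>\<not> k \<le> 2\<close> by (intro is_basis_independent_prefix[OF basis]) auto
  then have "x = 0" "y = 0" "z = 0"
    using spec[of "\<lambda>j. j < 3 \<longrightarrow> [x, y, z] ! j = 0" 0]
      spec[of "\<lambda>j. j < 3 \<longrightarrow> [x, y, z] ! j = 0" 1]
      spec[of "\<lambda>j. j < 3 \<longrightarrow> [x, y, z] ! j = 0" 2] by simp_all
  then show False using nonzero by simp
qed

lemma is_basis_cvec_card:
  assumes basis: "is_basis n (cvec k0) k e" and k0: "k0 = 1 \<or> k0 = 2"
  shows "k = k0"
proof -
  have span: "\<And>Y. Y \<in> cvec k0 \<Longrightarrow> \<exists>c. Y = (\<lambda>i. \<Sum>j<k. c j * e j i)"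
    using basis unfolding is_basis_def by blast
  have "k \<noteq> 0"
  proof
    assume "k = 0"
    then have "unitvec 0 = (\<lambda>i. 0)"
      using span[OF unitvec_cvec, of 0] k0 by auto
    then show False
      by (metis unitvec_def zero_neq_one)
  qed
  moreover have "k \<noteq> 1" if two: "k0 = 2"
  proof
    assume "k = 1"
    then obtain c d where "unitvec 0 = (\<lambda>i. c * e 0 i)" "unitvec 1 = (\<lambda>i. d * e 0 i)"
      using span[OF unitvec_cvec, of 0] span[OF unitvec_cvec, of 1] two by auto
    then have "c * e 0 0 = 1" "c * e 0 1 = 0" "d * e 0 0 = 0" "d * e 0 1 = 1"
      by (auto simp: unitvec_def fun_eq_iff dest: spec[of _ 0] spec[of _ 1])
    then show False by (metis mult_eq_0_iff zero_neq_one)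
  qed
  moreover have "k \<le> k0"
    using k0 is_basis_cvec1_le is_basis_cvec2_le basis by blast
  ultimately show ?thesis
    using k0 by linarith
qed

lemma cdim_cvec: "k = 1 \<or> k = 2 \<Longrightarrow> cdim n (cvec k) = k"
  unfolding cdim_def by (rule the_equality) (auto intro: is_basis_unitvec is_basis_cvec_card)

lemma cdet_1: "cdet 1 A = A 0 0"
  unfolding cdet_def by (simp add: lessThan_Suc)

lemma cdet_2: "cdet 2 A = A 0 0 * A 1 1 - A 0 1 * A 1 0"
proof -
  have "{..<2::nat} = insert 0 {1}" by auto
  then show ?thesis
    unfolding cdet_def
    by (simp add: sum_over_permutations_insert sign_swap_id swap_id_eq)
qed

lemma gram_det_1:
  assumes "1 \<le> n" "e 0 \<in> cvec 1"
  shows "gram_det n H 1 e = (cmod (e 0 0))\<^sup>2 * Re (H 0 0)"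
proof -
  have "hform n H (e 0) (e 0) = hform 1 H (e 0) (e 0)"
    using assms by (intro hform_truncate_cvec)
  then have "cdet 1 (\<lambda>j l. hform n H (e j) (e l)) = (e 0 0 * cnj (e 0 0)) * H 0 0"
    unfolding cdet_1 hform_1 by (simp add: algebra_simps)
  also have "e 0 0 * cnj (e 0 0) = of_real ((cmod (e 0 0))\<^sup>2)"
    by (simp add: complex_norm_square del: of_real_power)
  finally show ?thesis unfolding gram_det_def by simp
qed

lemma gram_det_2:
  assumes "2 \<le> n" "e 0 \<in> cvec 2" "e 1 \<in> cvec 2"
  shows "gram_det n H 2 e
    = (cmod (e 0 0 * e 1 1 - e 0 1 * e 1 0))\<^sup>2 * Re (H 0 0 * H 1 1 - H 0 1 * H 1 0)"
proof -
  define d where "d = e 0 0 * e 1 1 - e 0 1 * e 1 0"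
  \<comment> \<open>multiplicativity of the determinant for the 2 x 2 Gram matrix \<open>E H E\<^sup>*\<close>\<close>
  have "cdet 2 (\<lambda>j l. hform n H (e j) (e l)) = (d * cnj d) * (H 0 0 * H 1 1 - H 0 1 * H 1 0)"
    using assms unfolding cdet_2 d_def by (simp add: hform_truncate_cvec hform_2 algebra_simps)
  also have "d * cnj d = of_real ((cmod d)\<^sup>2)"
    by (simp add: complex_norm_square del: of_real_power)
  finally show ?thesis unfolding gram_det_def d_def by simp
qed

lemma form_prec_cvec1_iff:
  assumes U: "U_set n \<eta> a = cvec 1" and n: "1 \<le> n"
  shows "form_prec n \<eta> a H H' \<longleftrightarrow> Re (H 0 0) \<le> Re (H' 0 0)"
proof
  assume "form_prec n \<eta> a H H'"
  then have "gram_det n H 1 unitvec \<le> gram_det n H' 1 unitvec"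
    using is_basis_unitvec unfolding form_prec_def U by blast
  then show "Re (H 0 0) \<le> Re (H' 0 0)"
    using gram_det_1[where e = unitvec, OF n unitvec_cvec] by (simp add: unitvec_def)
next
  assume le: "Re (H 0 0) \<le> Re (H' 0 0)"
  show "form_prec n \<eta> a H H'"
    unfolding form_prec_def U
  proof (intro allI impI)
    fix k e assume basis: "is_basis n (cvec 1) k e"
    then have k: "k = 1" and e: "e 0 \<in> cvec 1"
      using is_basis_cvec_card[OF basis] unfolding is_basis_def by auto
    show "gram_det n H k e \<le> gram_det n H' k e"
      unfolding k gram_det_1[where e = e, OF n e] using le by (intro mult_left_mono) auto
  qed
qed

lemma form_prec_cvec2_iff:
  assumes U: "U_set n \<eta> a = cvec 2" and n: "2 \<le> n"
  shows "form_prec n \<eta> a H H' \<longleftrightarrow>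
    Re (H 0 0 * H 1 1 - H 0 1 * H 1 0) \<le> Re (H' 0 0 * H' 1 1 - H' 0 1 * H' 1 0)"
proof
  assume "form_prec n \<eta> a H H'"
  then have "gram_det n H 2 unitvec \<le> gram_det n H' 2 unitvec"
    using is_basis_unitvec unfolding form_prec_def U by blast
  then show "Re (H 0 0 * H 1 1 - H 0 1 * H 1 0) \<le> Re (H' 0 0 * H' 1 1 - H' 0 1 * H' 1 0)"
    using gram_det_2[where e = unitvec, OF n unitvec_cvec unitvec_cvec] by (simp add: unitvec_def)
next
  assume le: "Re (H 0 0 * H 1 1 - H 0 1 * H 1 0) \<le> Re (H' 0 0 * H' 1 1 - H' 0 1 * H' 1 0)"
  show "form_prec n \<eta> a H H'"
    unfolding form_prec_def U
  proof (intro allI impI)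
    fix k e assume basis: "is_basis n (cvec 2) k e"
    then have k: "k = 2" and e: "e 0 \<in> cvec 2" "e 1 \<in> cvec 2"
      using is_basis_cvec_card[OF basis] unfolding is_basis_def by auto
    show "gram_det n H k e \<le> gram_det n H' k e"
      unfolding k gram_det_2[where e = e, OF n e] using le by (intro mult_left_mono) auto
  qed
qed

lemma s_max_eqI:
  assumes "H0 \<in> F_set n \<eta> a"
    and "\<And>H. H \<in> F_set n \<eta> a \<Longrightarrow> form_prec n \<eta> a H H0"
    and "\<And>H. H \<in> F_set n \<eta> a \<Longrightarrow> form_prec n \<eta> a H0 H \<Longrightarrow> H = H0"
  shows "s_max n \<eta> a = H0"
  unfolding s_max_def using assms by (intro the_equality) auto

section \<open>The Wu metric of the model domains at the origin\<close>

definition diag2 :: "real \<Rightarrow> real \<Rightarrow> nat \<Rightarrow> nat \<Rightarrow> complex" where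
  "diag2 p q i j = (if i = 0 \<and> j = 0 then of_real p else if i = 1 \<and> j = 1 then of_real q else 0)"

lemma hform_diag2:
  assumes "1 \<le> n" "X \<in> cvec n"
  shows "hform n (diag2 p q) X X = of_real (p * (cmod (X 0))\<^sup>2 + q * (cmod (X 1))\<^sup>2)"
proof -
  have "hform n (diag2 p q) X X = of_real p * (X 0 * cnj (X 0)) + of_real q * (X 1 * cnj (X 1))"
  proof (cases "n = 1")
    case True
    then have "X 1 = 0" using assms(2) by (simp add: cvec_def)
    then show ?thesis
      using True hform_1[of "diag2 p q" X X] by (simp add: diag2_def)
  next
    case False
    with assms(1) have "hform n (diag2 p q) X X = hform 2 (diag2 p q) X X"
      by (intro hform_truncate_matrix) (auto simp: diag2_def)
    then show ?thesis by (simp add: hform_2 diag2_def algebra_simps)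
  qed
  also have "\<dots> = of_real (p * (cmod (X 0))\<^sup>2 + q * (cmod (X 1))\<^sup>2)"
    by (simp add: complex_norm_square del: of_real_power)
  finally show ?thesis .
qed

lemma diag2_in_F_set:
  assumes "1 \<le> n" "2 \<le> n \<or> q = 0" "p \<ge> 0" "q \<ge> 0"
    and bound: "\<And>X. X \<in> cvec n \<Longrightarrow> sqrt (p * (cmod (X 0))\<^sup>2 + q * (cmod (X 1))\<^sup>2) \<le> \<eta> a X"
  shows "diag2 p q \<in> F_set n \<eta> a"
  unfolding F_set_def psd_hermitian_def
  using assms by (auto simp: hform_diag2 diag2_def)

lemma F_set_diag2_eqI:
  assumes H: "H \<in> F_set n \<eta> a"
    and outside: "\<And>i j. i \<ge> 2 \<or> j \<ge> 2 \<Longrightarrow> H i j = 0"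
    and entries: "Re (H 0 0) = p" "Re (H 1 1) = q" "H 0 1 = 0"
  shows "H = diag2 p q"
proof (intro ext)
  fix i j
  have psd: "psd_hermitian n H" using H unfolding F_set_def by blast
  then have "H 1 0 = cnj (H 0 1)" unfolding psd_hermitian_def by blast
  moreover have "H 0 0 = of_real p" "H 1 1 = of_real q"
    using psd_hermitian_diag_real[OF psd, of 0] psd_hermitian_diag_real[OF psd, of 1] entries
    by metis+
  ultimately show "H i j = diag2 p q i j"
    using outside entries(3) by (cases "i < 2 \<and> j < 2") (auto simp: diag2_def less_2_cases_iff)
qed

lemma F_set_hform_le:
  assumes "H \<in> F_set n \<eta> a" "X \<in> cvec n"
  shows "Re (hform n H X X) \<le> (\<eta> a X)\<^sup>2"
proof -
  have "sqrt (Re (hform n H X X)) \<le> \<eta> a X" "Re (hform n H X X) \<ge> 0"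
    using assms unfolding F_set_def psd_hermitian_def by blast+
  then show ?thesis by (metis real_sqrt_pow2 power_mono real_sqrt_ge_zero)
qed

lemma s_max_m_index_first_coordinate:
  assumes n: "1 \<le> n" and \<eta>: "\<And>X. X \<in> cvec n \<Longrightarrow> \<eta> a X = cmod (X 0)"
  shows "s_max n \<eta> a = diag2 1 0" and "m_index n \<eta> a = 1"
proof -
  have vanish: "\<eta> a X = 0" if "X \<in> cvec n" "\<forall>i<1. X i = 0" for X
    using that \<eta> by simp
  have "V_set n \<eta> a = {X \<in> cvec n. \<forall>i<1. X i = 0}"
    using \<eta> vanish by (intro V_set_eq_coordinate_kernel) (auto intro!: exI[of _ 1])
  then have U: "U_set n \<eta> a = cvec 1"
    using n by (rule U_set_eq_cvec)
  then show "m_index n \<eta> a = 1"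
    unfolding m_index_def by (simp add: cdim_cvec)
  have outside: "H i j = 0" if "H \<in> F_set n \<eta> a" "i \<ge> 1 \<or> j \<ge> 1" for H i j
    using F_set_vanishing_entries[OF that(1) n vanish that(2)] by blast
  have e0: "unitvec 0 \<in> cvec n" "\<eta> a (unitvec 0) = 1"
    using n \<eta>[of "unitvec 0"] by (simp_all add: unitvec_cvec) (simp add: unitvec_def)
  have bound: "Re (H 0 0) \<le> 1" if "H \<in> F_set n \<eta> a" for H
    using F_set_hform_le[OF that e0(1)] e0(2) n by (simp add: hform_unitvec)
  have member: "diag2 1 0 \<in> F_set n \<eta> a"
    using n \<eta> by (intro diag2_in_F_set) auto
  show "s_max n \<eta> a = diag2 1 0"
  proof (rule s_max_eqI[OF member])
    fix H assume "H \<in> F_set n \<eta> a"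
    then show "form_prec n \<eta> a H (diag2 1 0)"
      using bound by (simp add: form_prec_cvec1_iff[OF U n] diag2_def)
    assume "form_prec n \<eta> a (diag2 1 0) H"
    then have "Re (H 0 0) = 1"
      using bound[OF \<open>H \<in> F_set n \<eta> a\<close>] by (simp add: form_prec_cvec1_iff[OF U n] diag2_def)
    then show "H = diag2 1 0"
      using outside[OF \<open>H \<in> F_set n \<eta> a\<close>] by (intro F_set_diag2_eqI[OF \<open>H \<in> F_set n \<eta> a\<close>]) auto
  qed
qed

lemma psd_hermitian_det2:
  assumes "psd_hermitian n H"
  shows "Re (H 0 0 * H 1 1 - H 0 1 * H 1 0) = Re (H 0 0) * Re (H 1 1) - (cmod (H 0 1))\<^sup>2"
proof -
  have "H 1 0 = cnj (H 0 1)" using assms unfolding psd_hermitian_def by blast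
  moreover obtain A B where "H 0 0 = of_real A" "H 1 1 = of_real B"
    using psd_hermitian_diag_real[OF assms] by metis
  moreover have "H 0 1 * cnj (H 0 1) = of_real ((cmod (H 0 1))\<^sup>2)"
    by (simp add: complex_norm_square del: of_real_power)
  ultimately show ?thesis by simp
qed

lemma exists_unimodular_polar: "\<exists>u. cmod u = 1 \<and> z = of_real (cmod z) * u"
proof (cases "z = 0")
  case False
  then have "z = of_real (cmod z) * sgn z" by (simp add: sgn_eq)
  with False show ?thesis by (intro exI[of _ "sgn z"]) (simp add: norm_sgn)
qed (auto intro: exI[of _ 1])

lemma hform_aligned_pair:
  fixes t \<rho> :: real
  assumes psd: "psd_hermitian n H" and n: "2 \<le> n"
    and u: "cmod u = 1" and H01: "H 0 1 = of_real b * u"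
  defines "X \<equiv> vadd (vscale (of_real t) (unitvec 0)) (vscale (of_real \<rho> * u) (unitvec 1))"
  shows "Re (hform n H X X) = t\<^sup>2 * Re (H 0 0) + 2 * t * \<rho> * b + \<rho>\<^sup>2 * Re (H 1 1)"
proof -
  obtain A B where AB: "H 0 0 = of_real A" "H 1 1 = of_real B"
    using psd_hermitian_diag_real[OF psd] by metis
  have H10: "H 1 0 = of_real b * cnj u"
    using psd H01 unfolding psd_hermitian_def by (metis complex_cnj_complex_of_real complex_cnj_mult)
  have uu: "u * cnj u = 1"
    using u by (simp add: complex_norm_square[symmetric])
  have "hform n H X X = of_real t * cnj (of_real t) * H 0 0 + of_real t * cnj (of_real \<rho> * u) * H 0 1
      + of_real \<rho> * u * cnj (of_real t) * H 1 0 + of_real \<rho> * u * cnj (of_real \<rho> * u) * H 1 1"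
    unfolding X_def using n by (intro hform_two_unitvec) auto
  also have "\<dots> = of_real (t * t * A) + of_real (t * \<rho> * b) * (u * cnj u)
      + of_real (\<rho> * t * b) * (u * cnj u) + of_real (\<rho> * \<rho> * B) * (u * cnj u)"
    unfolding H01 H10 AB by (simp add: algebra_simps)
  finally show ?thesis
    unfolding uu AB by (simp add: power2_eq_square)
qed

lemma hexagon_norm_aligned_pair:
  assumes "t \<ge> 0" "\<rho> \<ge> 0" "cmod u = 1" "r > 0"
  shows "hexagon_norm r (vadd (vscale (of_real t) (unitvec 0)) (vscale (of_real \<rho> * u) (unitvec 1)))
    = max (max t (\<rho> / r)) (2 / 3 * (t + \<rho> / r))"
  using assms by (simp add: hexagon_norm_def vadd_def vscale_def unitvec_def norm_mult)

lemma F_set_hexagon_vertex_bounds: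
  assumes n: "2 \<le> n" and r: "r > 0"
    and \<eta>: "\<And>X. X \<in> cvec n \<Longrightarrow> \<eta> a X = hexagon_norm r X" and H: "H \<in> F_set n \<eta> a"
  shows "4 * Re (H 0 0) + 4 * (r * cmod (H 0 1)) + r\<^sup>2 * Re (H 1 1) \<le> 4"
    and "Re (H 0 0) + 4 * (r * cmod (H 0 1)) + 4 * (r\<^sup>2 * Re (H 1 1)) \<le> 4"
proof -
  have psd: "psd_hermitian n H" using H unfolding F_set_def by blast
  obtain u where u: "cmod u = 1" "H 0 1 = of_real (cmod (H 0 1)) * u"
    using exists_unimodular_polar by blast
  have test: "t\<^sup>2 * Re (H 0 0) + 2 * t * \<rho> * cmod (H 0 1) + \<rho>\<^sup>2 * Re (H 1 1) \<le> 4"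
    if "t \<ge> 0" "\<rho> \<ge> 0" "max (max t (\<rho> / r)) (2 / 3 * (t + \<rho> / r)) = 2" for t \<rho>
  proof -
    define X where "X = vadd (vscale (of_real t) (unitvec 0)) (vscale (of_real \<rho> * u) (unitvec 1))"
    have "X \<in> cvec n" unfolding X_def using n by (intro two_unitvec_cvec) auto
    then have "Re (hform n H X X) \<le> (hexagon_norm r X)\<^sup>2"
      using F_set_hform_le[OF H] \<eta> by metis
    then show ?thesis
      using hform_aligned_pair[OF psd n u] hexagon_norm_aligned_pair[OF that(1,2) u(1) r] that(3)
      unfolding X_def by simp
  qed
  \<comment> \<open>two vertices of the hexagonal unit sphere of \<open>hexagon_norm r\<close>, scaled by 2\<close>
  show "4 * Re (H 0 0) + 4 * (r * cmod (H 0 1)) + r\<^sup>2 * Re (H 1 1) \<le> 4"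
    using test[of 2 r] r by (simp add: algebra_simps)
  show "Re (H 0 0) + 4 * (r * cmod (H 0 1)) + 4 * (r\<^sup>2 * Re (H 1 1)) \<le> 4"
    using test[of 1 "2 * r"] r by (simp add: algebra_simps)
qed

lemma det_le_of_hexagon_vertex_bounds:
  fixes A B \<beta> :: real
  assumes "A \<ge> 0" "B \<ge> 0" "\<beta> \<ge> 0" "4 * A + 4 * \<beta> + B \<le> 4" "A + 4 * \<beta> + 4 * B \<le> 4"
  shows "A * B - \<beta>\<^sup>2 \<le> 16 / 25"
    and "A * B - \<beta>\<^sup>2 \<ge> 16 / 25 \<Longrightarrow> \<beta> = 0 \<and> A = 4 / 5 \<and> B = 4 / 5"
proof -
  have sum: "A + B \<le> 8 / 5 - 8 / 5 * \<beta>" using assms by linarith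
  have amgm: "4 * (A * B) = (A + B)\<^sup>2 - (A - B)\<^sup>2"
    by (simp add: power2_eq_square algebra_simps)
  have "(A + B)\<^sup>2 \<le> (8 / 5 - 8 / 5 * \<beta>)\<^sup>2"
    using sum assms(1,2) by (intro power_mono) auto
  then have key: "4 * (A * B) - 4 * \<beta>\<^sup>2 + (A - B)\<^sup>2 \<le> 64 / 25 - 128 / 25 * \<beta> - 36 / 25 * \<beta>\<^sup>2"
    using amgm by (simp add: power2_eq_square algebra_simps)
  moreover have "0 \<le> 128 / 25 * \<beta> + 36 / 25 * \<beta>\<^sup>2" "0 \<le> (A - B)\<^sup>2"
    using assms(3) by simp_all
  ultimately show "A * B - \<beta>\<^sup>2 \<le> 16 / 25" by linarith
  assume "A * B - \<beta>\<^sup>2 \<ge> 16 / 25"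
  with key have "128 / 25 * \<beta> + 36 / 25 * \<beta>\<^sup>2 \<le> 0" "(A - B)\<^sup>2 \<le> 0"
    using \<open>0 \<le> 128 / 25 * \<beta> + 36 / 25 * \<beta>\<^sup>2\<close> \<open>0 \<le> (A - B)\<^sup>2\<close> by linarith+
  then have "\<beta> = 0" "A = B"
    using assms(3) zero_le_power2[of \<beta>] by (linarith, simp)
  moreover from this have "A * A \<ge> 16 / 25" "A \<le> 4 / 5"
    using \<open>A * B - \<beta>\<^sup>2 \<ge> 16 / 25\<close> sum by simp_all
  moreover have "A * A \<le> 4 / 5 * A"
    using \<open>A \<le> 4 / 5\<close> assms(1) by (intro mult_right_mono)
  ultimately show "\<beta> = 0 \<and> A = 4 / 5 \<and> B = 4 / 5" by auto
qed

lemma ellipse_le_hexagon: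
  fixes x v :: real
  assumes "x \<ge> 0" "v \<ge> 0"
  shows "4 / 5 * (x\<^sup>2 + v\<^sup>2) \<le> (max (max x v) (2 / 3 * (x + v)))\<^sup>2"
proof -
  consider "2 * v \<le> x" | "2 * x \<le> v" | "x < 2 * v" "v < 2 * x" by linarith
  then show ?thesis
  proof cases
    case 1
    have "v\<^sup>2 \<le> (x / 2)\<^sup>2" using 1 assms by (intro power_mono) auto
    then have "4 / 5 * (x\<^sup>2 + v\<^sup>2) \<le> x\<^sup>2" by (simp add: power2_eq_square)
    also have "x\<^sup>2 \<le> (max (max x v) (2 / 3 * (x + v)))\<^sup>2" using assms by (intro power_mono) auto
    finally show ?thesis .
  next
    case 2
    have "x\<^sup>2 \<le> (v / 2)\<^sup>2" using 2 assms by (intro power_mono) auto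
    then have "4 / 5 * (x\<^sup>2 + v\<^sup>2) \<le> v\<^sup>2" by (simp add: power2_eq_square)
    also have "v\<^sup>2 \<le> (max (max x v) (2 / 3 * (x + v)))\<^sup>2" using assms by (intro power_mono) auto
    finally show ?thesis .
  next
    case 3
    have "(2 * x - v) * (x - 2 * v) \<le> 0" using 3 by (intro mult_nonneg_nonpos) auto
    then have "4 / 5 * (x\<^sup>2 + v\<^sup>2) \<le> (2 / 3 * (x + v))\<^sup>2"
      by (simp add: power2_eq_square algebra_simps)
    also have "\<dots> \<le> (max (max x v) (2 / 3 * (x + v)))\<^sup>2" using assms by (intro power_mono) auto
    finally show ?thesis .
  qed
qed

lemma F_set_hexagon_det:
  assumes n: "2 \<le> n" and r: "r > 0"
    and \<eta>: "\<And>X. X \<in> cvec n \<Longrightarrow> \<eta> a X = hexagon_norm r X" and H: "H \<in> F_set n \<eta> a"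
  shows "Re (H 0 0 * H 1 1 - H 0 1 * H 1 0) \<le> 16 / (25 * r\<^sup>2)"
    and "Re (H 0 0 * H 1 1 - H 0 1 * H 1 0) \<ge> 16 / (25 * r\<^sup>2) \<Longrightarrow>
           Re (H 0 0) = 4 / 5 \<and> Re (H 1 1) = 4 / (5 * r\<^sup>2) \<and> H 0 1 = 0"
proof -
  have psd: "psd_hermitian n H" using H unfolding F_set_def by blast
  \<comment> \<open>rescaling the second coordinate by \<open>r\<close> normalises the hexagon\<close>
  define A B \<beta> where "A = Re (H 0 0)" and "B = r\<^sup>2 * Re (H 1 1)" and "\<beta> = r * cmod (H 0 1)"
  have scaled: "r\<^sup>2 * Re (H 0 0 * H 1 1 - H 0 1 * H 1 0) = A * B - \<beta>\<^sup>2"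
    unfolding psd_hermitian_det2[OF psd] A_def B_def \<beta>_def by (simp add: algebra_simps power2_eq_square)
  have nonneg: "A \<ge> 0" "B \<ge> 0" "\<beta> \<ge> 0"
    unfolding A_def B_def \<beta>_def using psd_hermitian_diag_nonneg[OF psd] n r by simp_all
  note bounds = det_le_of_hexagon_vertex_bounds[OF nonneg
      F_set_hexagon_vertex_bounds[OF n r \<eta> H, folded A_def B_def \<beta>_def]]
  show "Re (H 0 0 * H 1 1 - H 0 1 * H 1 0) \<le> 16 / (25 * r\<^sup>2)"
    using bounds(1) scaled r by (simp add: field_simps)
  assume "Re (H 0 0 * H 1 1 - H 0 1 * H 1 0) \<ge> 16 / (25 * r\<^sup>2)"
  then have "A * B - \<beta>\<^sup>2 \<ge> 16 / 25"
    using scaled r by (simp add: field_simps)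
  then show "Re (H 0 0) = 4 / 5 \<and> Re (H 1 1) = 4 / (5 * r\<^sup>2) \<and> H 0 1 = 0"
    using bounds(2) r unfolding A_def B_def \<beta>_def by (auto simp: field_simps)
qed

lemma ellipse_in_F_set_hexagon:
  assumes n: "2 \<le> n" and r: "r > 0"
    and \<eta>: "\<And>X. X \<in> cvec n \<Longrightarrow> \<eta> a X = hexagon_norm r X"
  shows "diag2 (4 / 5) (4 / (5 * r\<^sup>2)) \<in> F_set n \<eta> a"
proof (rule diag2_in_F_set)
  fix X assume "X \<in> cvec n"
  have "4 / 5 * (cmod (X 0))\<^sup>2 + 4 / (5 * r\<^sup>2) * (cmod (X 1))\<^sup>2
      = 4 / 5 * ((cmod (X 0))\<^sup>2 + (cmod (X 1) / r)\<^sup>2)"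
    by (simp add: field_simps)
  also have "\<dots> \<le> (hexagon_norm r X)\<^sup>2"
    unfolding hexagon_norm_def using r by (intro ellipse_le_hexagon) auto
  finally show "sqrt (4 / 5 * (cmod (X 0))\<^sup>2 + 4 / (5 * r\<^sup>2) * (cmod (X 1))\<^sup>2) \<le> \<eta> a X"
    using \<eta>[OF \<open>X \<in> cvec n\<close>] hexagon_norm_nonneg real_le_lsqrt by auto
qed (use n in auto)

lemma s_max_m_index_hexagon_norm:
  assumes n: "2 \<le> n" and r: "r > 0"
    and \<eta>: "\<And>X. X \<in> cvec n \<Longrightarrow> \<eta> a X = hexagon_norm r X"
  shows "s_max n \<eta> a = diag2 (4 / 5) (4 / (5 * r\<^sup>2))" and "m_index n \<eta> a = 2"
proof -
  have vanish: "\<eta> a X = 0" if "X \<in> cvec n" "\<forall>i<2. X i = 0" for X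
    using that \<eta> by (simp add: hexagon_norm_def)
  have "\<exists>c>0. \<forall>Y\<in>cvec n. c * cmod (Y i) \<le> \<eta> a Y" if "i < 2" for i
  proof (cases "i = 0")
    case False
    with that have "i = 1" by simp
    with r show ?thesis
      using \<eta> by (intro exI[of _ "1 / r"]) (auto simp: hexagon_norm_def)
  qed (use \<eta> in \<open>auto simp: hexagon_norm_def intro!: exI[of _ 1]\<close>)
  then have "V_set n \<eta> a = {X \<in> cvec n. \<forall>i<2. X i = 0}"
    using \<eta> vanish hexagon_norm_nonneg by (intro V_set_eq_coordinate_kernel) auto
  then have U: "U_set n \<eta> a = cvec 2"
    using n by (rule U_set_eq_cvec)
  then show "m_index n \<eta> a = 2"
    unfolding m_index_def by (simp add: cdim_cvec)
  have member: "diag2 (4 / 5) (4 / (5 * r\<^sup>2)) \<in> F_set n \<eta> a"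
    using n r \<eta> by (rule ellipse_in_F_set_hexagon)
  have det_member: "Re (diag2 (4 / 5) (4 / (5 * r\<^sup>2)) 0 0 * diag2 (4 / 5) (4 / (5 * r\<^sup>2)) 1 1
      - diag2 (4 / 5) (4 / (5 * r\<^sup>2)) 0 1 * diag2 (4 / 5) (4 / (5 * r\<^sup>2)) 1 0) = 16 / (25 * r\<^sup>2)"
    unfolding diag2_def by (simp add: power2_eq_square)
  show "s_max n \<eta> a = diag2 (4 / 5) (4 / (5 * r\<^sup>2))"
  proof (rule s_max_eqI[OF member])
    fix H assume H: "H \<in> F_set n \<eta> a"
    show "form_prec n \<eta> a H (diag2 (4 / 5) (4 / (5 * r\<^sup>2)))"
      unfolding form_prec_cvec2_iff[OF U n] det_member by (rule F_set_hexagon_det(1)[OF n r \<eta> H])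
    assume "form_prec n \<eta> a (diag2 (4 / 5) (4 / (5 * r\<^sup>2))) H"
    then have "Re (H 0 0) = 4 / 5 \<and> Re (H 1 1) = 4 / (5 * r\<^sup>2) \<and> H 0 1 = 0"
      using F_set_hexagon_det(2)[OF n r \<eta> H] unfolding form_prec_cvec2_iff[OF U n] det_member
      by blast
    then show "H = diag2 (4 / 5) (4 / (5 * r\<^sup>2))"
      using F_set_vanishing_entries[OF H n vanish] by (intro F_set_diag2_eqI[OF H]) auto
  qed
qed

lemma Wu_tilde_unitvec0: "0 < n \<Longrightarrow> Wu_tilde n \<eta> a (unitvec 0) = sqrt (Re (s_max n \<eta> a 0 0))"
  unfolding Wu_tilde_def by (simp add: hform_unitvec)

lemma Wu_disc_cylinder_origin:
  assumes hc: "hol_contractible \<alpha>" and n: "1 \<le> n"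
  shows "Wu_tilde n (\<alpha> n (disc_cylinder n)) origin (unitvec 0) = 1"
    and "Wu n (\<alpha> n (disc_cylinder n)) origin (unitvec 0) = 1"
proof -
  note data = s_max_m_index_first_coordinate[where \<eta> = "\<alpha> n (disc_cylinder n)" and a = origin,
      OF n contractible_disc_cylinder_origin[OF hc n]]
  show "Wu_tilde n (\<alpha> n (disc_cylinder n)) origin (unitvec 0) = 1"
    using n by (simp add: Wu_tilde_unitvec0 data diag2_def)
  then show "Wu n (\<alpha> n (disc_cylinder n)) origin (unitvec 0) = 1"
    unfolding Wu_def by (simp add: data)
qed

lemma Wu_truncated_cylinder_origin:
  assumes hc: "hol_contractible \<alpha>" and n: "2 \<le> n" and r: "r > 0"
  shows "Wu_tilde n (\<alpha> n (truncated_cylinder n r)) origin (unitvec 0) = sqrt (4 / 5)"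
    and "Wu n (\<alpha> n (truncated_cylinder n r)) origin (unitvec 0) = sqrt (8 / 5)"
proof -
  have "1 \<le> n" using n by simp
  note data = s_max_m_index_hexagon_norm[where \<eta> = "\<alpha> n (truncated_cylinder n r)" and a = origin,
      OF n r contractible_truncated_cylinder_origin[OF hc \<open>1 \<le> n\<close> r]]
  show "Wu_tilde n (\<alpha> n (truncated_cylinder n r)) origin (unitvec 0) = sqrt (4 / 5)"
    using n by (simp add: Wu_tilde_unitvec0 data diag2_def)
  then show "Wu n (\<alpha> n (truncated_cylinder n r)) origin (unitvec 0) = sqrt (8 / 5)"
    unfolding Wu_def using n by (simp add: data real_sqrt_mult[symmetric])
qed

theorem proposition3p7:
  fixes \<alpha> :: "nat \<Rightarrow> (nat \<Rightarrow> complex) set \<Rightarrow> (nat \<Rightarrow> complex) \<Rightarrow> (nat \<Rightarrow> complex) \<Rightarrow> real"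
    and n :: nat
  assumes "hol_contractible \<alpha>" and "n \<ge> 3"
  shows "\<exists>D Ds. cdomain n D \<and> (\<forall>m. cdomain n (Ds m) \<and> Ds m \<subseteq> Ds (Suc m)) \<and>
           (\<Union>m. Ds m) = D \<and>
           \<not> (\<forall>a\<in>D. \<forall>X\<in>cvec n.
                 (\<lambda>m. Wu_tilde n (\<alpha> n (Ds m)) a X) \<longlonglongrightarrow> Wu_tilde n (\<alpha> n D) a X) \<and>
           \<not> (\<forall>a\<in>D. \<forall>X\<in>cvec n.
                 (\<lambda>m. Wu n (\<alpha> n (Ds m)) a X) \<longlonglongrightarrow> Wu n (\<alpha> n D) a X)"
proof -
  have n: "1 \<le> n" "2 \<le> n" using assms(2) by auto
  define Ds where "Ds m = truncated_cylinder n (real (Suc m))" for m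
  have chain: "cdomain n (Ds m) \<and> Ds m \<subseteq> Ds (Suc m)" for m
    unfolding Ds_def by (simp add: cdomain_truncated_cylinder truncated_cylinder_mono)
  have union: "(\<Union>m. Ds m) = disc_cylinder n"
    unfolding Ds_def by (rule Union_truncated_cylinder)
  have witness: "origin \<in> disc_cylinder n" "unitvec 0 \<in> cvec n"
    using n by (simp_all add: mem_disc_cylinder zero_cvec unitvec_cvec)
  have "Wu_tilde n (\<alpha> n (Ds m)) origin (unitvec 0) = sqrt (4 / 5)"
    and "Wu n (\<alpha> n (Ds m)) origin (unitvec 0) = sqrt (8 / 5)" for m
    unfolding Ds_def using Wu_truncated_cylinder_origin[OF assms(1) n(2)] by simp_all
  note at_origin = this Wu_disc_cylinder_origin[OF assms(1) n(1)]
  have "\<not> (\<lambda>m. Wu_tilde n (\<alpha> n (Ds m)) origin (unitvec 0))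
          \<longlonglongrightarrow> Wu_tilde n (\<alpha> n (disc_cylinder n)) origin (unitvec 0)"
    and "\<not> (\<lambda>m. Wu n (\<alpha> n (Ds m)) origin (unitvec 0))
          \<longlonglongrightarrow> Wu n (\<alpha> n (disc_cylinder n)) origin (unitvec 0)"
    unfolding at_origin by (simp_all add: LIMSEQ_const_iff)
  with chain union witness cdomain_disc_cylinder show ?thesis by blast
qed

end
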